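(* Let $f_1,\ldots,f_k:[a,b]\to\mathbb R$ be bounded and continuous almost everywhere, with $\mathcal{ER}(f_j)=[\inf_{[a,b]}f_j,\sup_{[a,b]}f_j]$ for every $j=1,\ldots,k$. Let $\{\Lambda_n=\{\lambda_{1,n},\ldots,\lambda_{d_n,n}\}\}_n$ be a sequence of finite multisets of real numbers with $d_n\to\infty$. Assume: (i) $\{\Lambda_n\}_n$ has an asymptotic distribution described by $f=\mathrm{diag}(f_1,\ldots,f_k)$; (ii) for every $n$ there is a partition $\{\tilde\Lambda_{n,1},\ldots,\tilde\Lambda_{n,k}\}$ of $\Lambda_n$ such that, for every $j$, $|\tilde\Lambda_{n,j}|/d_n\to1/k$ and $\tilde\Lambda_{n,j}\subseteq[\inf_{[a,b]}f_j-\epsilon_n,\sup_{[a,b]}f_j+\epsilon_n]$ for some $\epsilon_n\to0$. Then for every $n$ there is a partition $\{\Lambda_{n,1},\ldots,\Lambda_{n,k}\}$ of $\Lambda_n$ such that for every $j=1,\ldots,k$: (a) $|\Lambda_{n,j}|=|\tilde\Lambda_{n,j}|$; (b) $\Lambda_{n,j}\subseteq[\inf_{[a,b]}f_j-\delta_n,\sup_{[a,b]}f_j+\delta_n]$ for some $\delta_n\to0$; (c) $\{\Lambda_{n,j}\}_n$ has an asymptotic distribution described by $f_j$; (d) writing $\Lambda_{n,j}=\{\lambda^{(j)}_{1,n},\ldots,\lambda^{(j)}_{|\Lambda_{n,j}|,n}\}$, for every asymptotically uniform grid $\{x^{(j)}_{i,n}\}_{i=1,\ldots,|\Lambda_{n,j}|}$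 in $[a,b]$ contained in $[a,b]$, if $\sigma_{n,j},\tau_{n,j}$ are permutations of $\{1,\ldots,|\Lambda_{n,j}|\}$ sorting $[f_j(x^{(j)}_{\sigma_{n,j}(i),n})]_i$ and $[\lambda^{(j)}_{\tau_{n,j}(i),n}]_i$ in increasing order, then $\max_{i}|f_j(x^{(j)}_{\sigma_{n,j}(i),n})-\lambda^{(j)}_{\tau_{n,j}(i),n}|\to0$ as $n\to\infty$; in particular $\min_\tau\max_i|f_j(x^{(j)}_{i,n})-\lambda^{(j)}_{\tau(i),n}|\to0$, the minimum over all permutations $\tau$ of $\{1,\ldots,|\Lambda_{n,j}|\}$.
   Context: For measurable $g:[a,b]\to\mathbb R$, $\mathcal{ER}(g)=\{z\in\mathbb R:\mu_1\{x:|g(x)-z|<\epsilon\}>0\ \forall\epsilon>0\}$. A sequence of finite multisets $\{\Lambda_n=\{\lambda_{1,n},\ldots,\lambda_{d_n,n}\}\}_n$ with $d_n\to\infty$ has an asymptotic distribution described by $\mathrm{diag}(f_1,\ldots,f_k)$ if $\lim_n\frac1{d_n}\sum_{i=1}^{d_n}F(\lambda_{i,n})=\frac1{b-a}\int_a^b\frac{1}{k}\sum_{j=1}^kF(f_j(x))\,dx$ for every continuous $F:\mathbb C\to\mathbb C$ with bounded support; it has an asymptotic distribution described by a scalar $g$ if this holds with $k=1$, $f_1=g$. A sequence of points $\{x_{i,n}\}_{i=1,\ldots,m_n}$ with $m_n\to\infty$ is an asymptotically uniform grid in $[a,b]$ if $\max_{i}|x_{i,n}-(a+i(b-a)/m_n)|\to0$.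 *)

theory Defs
  imports "HOL-Analysis.Analysis" "HOL-Library.Multiset" "HOL-Combinatorics.Permutations"
begin

definition ess_range :: "real \<Rightarrow> real \<Rightarrow> (real \<Rightarrow> real) \<Rightarrow> real set" where
  "ess_range a b g = {z. \<forall>e>0. emeasure lebesgue {x\<in>{a..b}. \<bar>g x - z\<bar> < e} > 0}"

definition has_distr_diag ::
  "real \<Rightarrow> real \<Rightarrow> nat \<Rightarrow> (nat \<Rightarrow> real \<Rightarrow> real) \<Rightarrow> (nat \<Rightarrow> real multiset) \<Rightarrow> bool" where
  "has_distr_diag a b k f L \<longleftrightarrow>
     filterlim (\<lambda>n. size (L n)) at_top sequentially \<and>
     (\<forall>F::complex \<Rightarrow> complex. continuous_on UNIV F \<and> bounded {z. F z \<noteq> 0} \<longrightarrow>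
        (\<lambda>n. (\<Sum>\<^sub># (image_mset (\<lambda>l. F (complex_of_real l)) (L n))) / of_nat (size (L n)))
          \<longlonglongrightarrow> integral {a..b} (\<lambda>x. (\<Sum>j=1..k. F (complex_of_real (f j x))) / of_nat k)
                / complex_of_real (b - a))"

definition has_distr ::
  "real \<Rightarrow> real \<Rightarrow> (real \<Rightarrow> real) \<Rightarrow> (nat \<Rightarrow> real multiset) \<Rightarrow> bool" where
  "has_distr a b g L \<longleftrightarrow>
     filterlim (\<lambda>n. size (L n)) at_top sequentially \<and>
     (\<forall>F::complex \<Rightarrow> complex. continuous_on UNIV F \<and> bounded {z. F z \<noteq> 0} \<longrightarrow>
        (\<lambda>n. (\<Sum>\<^sub># (image_mset (\<lambda>l. F (complex_of_real l)) (L n))) / of_nat (size (L n)))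
          \<longlonglongrightarrow> integral {a..b} (\<lambda>x. F (complex_of_real (g x))) / complex_of_real (b - a))"

definition asym_unif_grid :: "real \<Rightarrow> real \<Rightarrow> (nat \<Rightarrow> nat) \<Rightarrow> (nat \<Rightarrow> nat \<Rightarrow> real) \<Rightarrow> bool" where
  "asym_unif_grid a b m x \<longleftrightarrow>
     filterlim m at_top sequentially \<and>
     (\<lambda>n. Max ((\<lambda>i. \<bar>x n i - (a + real i * (b - a) / real (m n))\<bar>) ` {1..m n})) \<longlonglongrightarrow> 0"

end

theory Submission
  imports Defs "HOL-Probability.Weak_Convergence"
begin

text \<open>Sample each \<open>f\<^sub>j\<close> on a uniform grid with as many points as the \<open>j\<close>-th prescribed block
  and tag every sample with \<open>j\<close>. Riemann sums on asymptotically uniform grids converge for bounded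
  symbols that are continuous almost everywhere, so the sorted tagged samples and the sorted
  eigenvalues have the same limit distribution, the mixture of the \<open>f\<^sub>j\<close>. Since every essential
  range is an interval around which the prescribed blocks concentrate, the two sorted sequences
  cannot be separated across a gap of that distribution: their \<open>i\<close>-th entries are uniformly close.
  Giving the \<open>i\<close>-th smallest eigenvalue to the block named by the tag of the \<open>i\<close>-th smallest sample
  yields the partition. Each block is then an entrywise small perturbation of the samples of its
  symbol, which gives (a)--(c), and (d) is the same sorted matching argument for a single symbol.\<close>

section \<open>Test functions and convergence in distribution\<close>

definition test_function :: "(complex \<Rightarrow> complex) \<Rightarrow> bool" where
  "test_function F \<longleftrightarrow> continuous_on UNIV F \<and> bounded {z. F z \<noteq> 0}"

definition empirical_mean :: "(complex \<Rightarrow> complex) \<Rightarrow> real multiset \<Rightarrow> complex" where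
  "empirical_mean F M = (\<Sum>\<^sub># (image_mset (\<lambda>l. F (complex_of_real l)) M)) / of_nat (size M)"

definition distr_converges ::
  "(nat \<Rightarrow> real multiset) \<Rightarrow> ((complex \<Rightarrow> complex) \<Rightarrow> complex) \<Rightarrow> bool" where
  "distr_converges L \<Phi> \<longleftrightarrow> (\<forall>F. test_function F \<longrightarrow> (\<lambda>n. empirical_mean F (L n)) \<longlonglongrightarrow> \<Phi> F)"

definition symbol_mean :: "real \<Rightarrow> real \<Rightarrow> (real \<Rightarrow> real) \<Rightarrow> (complex \<Rightarrow> complex) \<Rightarrow> complex" where
  "symbol_mean a b g F = integral {a..b} (\<lambda>t. F (complex_of_real (g t))) / complex_of_real (b - a)"

definition mixture_mean ::
  "real \<Rightarrow> real \<Rightarrow> nat set \<Rightarrow> (nat \<Rightarrow> real \<Rightarrow> real) \<Rightarrow> (complex \<Rightarrow> complex) \<Rightarrow> complex" where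
  "mixture_mean a b J f F = (\<Sum>j\<in>J. symbol_mean a b (f j) F) / of_nat (card J)"

lemma has_distr_iff:
  "has_distr a b g L \<longleftrightarrow>
     filterlim (\<lambda>n. size (L n)) at_top sequentially \<and> distr_converges L (symbol_mean a b g)"
  unfolding has_distr_def distr_converges_def test_function_def empirical_mean_def symbol_mean_def
  by simp

lemma size_filter_mset_mset: "size (filter_mset P (mset xs)) = length (filter P xs)"
  by (metis mset_filter size_mset)

lemma empirical_mean_mset:
  "empirical_mean F (mset xs) = (\<Sum>l\<leftarrow>xs. F (complex_of_real l)) / of_nat (length xs)"
  unfolding empirical_mean_def by (metis mset_map size_mset sum_mset_sum_list)

lemma empirical_mean_diff:
  "empirical_mean (\<lambda>z. F z - G z) M = empirical_mean F M - empirical_mean G M"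
proof -
  have "(\<Sum>\<^sub># (image_mset (\<lambda>l. F (complex_of_real l) - G (complex_of_real l)) M)) =
        (\<Sum>\<^sub># (image_mset (\<lambda>l. F (complex_of_real l)) M)) -
        (\<Sum>\<^sub># (image_mset (\<lambda>l. G (complex_of_real l)) M))"
    by (induction M) auto
  thus ?thesis unfolding empirical_mean_def by (simp add: diff_divide_distrib)
qed

lemma empirical_mean_sum:
  assumes "finite J"
  shows "empirical_mean F (\<Sum>j\<in>J. M j) =
    (\<Sum>j\<in>J. complex_of_real (real (size (M j)) / real (size (\<Sum>j\<in>J. M j))) * empirical_mean F (M j))"
proof -
  define d where "d = size (\<Sum>j\<in>J. M j)"
  have "(\<Sum>\<^sub># (image_mset (\<lambda>l. F (complex_of_real l)) (\<Sum>j\<in>J. M j))) =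
      (\<Sum>j\<in>J. \<Sum>\<^sub># (image_mset (\<lambda>l. F (complex_of_real l)) (M j)))"
    using assms by (induction J rule: finite_induct) auto
  hence "empirical_mean F (\<Sum>j\<in>J. M j) =
      (\<Sum>j\<in>J. \<Sum>\<^sub># (image_mset (\<lambda>l. F (complex_of_real l)) (M j))) / of_nat d"
    by (simp add: empirical_mean_def d_def)
  also have "\<dots> = (\<Sum>j\<in>J. complex_of_real (real (size (M j)) / real d) * empirical_mean F (M j))"
    unfolding sum_divide_distrib
    by (intro sum.cong refl) (auto simp: empirical_mean_def field_simps)
  finally show ?thesis by (simp add: d_def)
qed

lemma test_function_support:
  assumes "test_function F"
  obtains R where "R > 0" "\<And>z. norm z > R \<Longrightarrow> F z = 0"
proof -
  obtain R where "R > 0" "\<And>z. F z \<noteq> 0 \<Longrightarrow> norm z \<le> R"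
    using assms by (auto simp: test_function_def bounded_pos)
  thus ?thesis using that by force
qed

lemma test_function_isCont: "test_function F \<Longrightarrow> isCont F z"
  by (simp add: test_function_def continuous_on_eq_continuous_at)

lemma test_function_bounded:
  assumes "test_function F"
  obtains B where "\<And>z. norm (F z) \<le> B"
proof -
  obtain R where R: "\<And>z. norm z > R \<Longrightarrow> F z = 0" using test_function_support[OF assms] by blast
  have "continuous_on (cball 0 R) F"
    using assms by (auto simp: test_function_def intro: continuous_on_subset)
  hence "compact (F ` cball 0 R)" by (intro compact_continuous_image) auto
  then obtain B where B: "\<And>z. z \<in> cball 0 R \<Longrightarrow> norm (F z) \<le> B"
    using compact_imp_bounded bounded_iff by (metis image_eqI)
  have "norm (F z) \<le> max B 0" for z
    using B[of z] R[of z] by (cases "norm z \<le> R") auto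
  thus ?thesis using that by blast
qed

lemma test_function_uniformly_continuous:
  assumes "test_function F"
  shows "uniformly_continuous_on UNIV F"
  unfolding uniformly_continuous_on_def
proof (intro allI impI)
  fix e :: real assume e: "e > 0"
  obtain R where R: "\<And>z. norm z > R \<Longrightarrow> F z = 0" using test_function_support[OF assms] by blast
  have "continuous_on (cball 0 (R + 1)) F"
    using assms by (auto simp: test_function_def intro: continuous_on_subset)
  hence "uniformly_continuous_on (cball 0 (R + 1)) F" by (intro compact_uniformly_continuous) auto
  then obtain d where d: "d > 0" "\<And>x x'. x \<in> cball 0 (R + 1) \<Longrightarrow> x' \<in> cball 0 (R + 1) \<Longrightarrow>
      dist x' x < d \<Longrightarrow> dist (F x') (F x) < e"
    using e unfolding uniformly_continuous_on_def by metis
  have "dist (F x') (F x) < e" if "dist x' x < min d 1" for x x'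
  proof (cases "norm x \<le> R + 1 \<and> norm x' \<le> R + 1")
    case True thus ?thesis using d that by auto
  next
    case False
    \<comment> \<open>two points at distance less than 1 that are not both in the ball of radius R + 1
        both lie outside the support\<close>
    have "norm x' \<le> norm x + dist x' x" "norm x \<le> norm x' + dist x' x"
      using norm_triangle_ineq[of x "x' - x"] norm_triangle_ineq[of x' "x - x'"]
      by (simp_all add: dist_norm norm_minus_commute)
    thus ?thesis using False that R[of x] R[of x'] e by auto
  qed
  thus "\<exists>d>0. \<forall>x\<in>UNIV. \<forall>x'\<in>UNIV. dist x' x < d \<longrightarrow> dist (F x') (F x) < e"
    using d(1) by (intro exI[of _ "min d 1"]) auto
qed

lemma test_function_diff:
  assumes "test_function F" "test_function G"
  shows "test_function (\<lambda>z. F z - G z)"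
proof -
  have "bounded ({z. F z \<noteq> 0} \<union> {z. G z \<noteq> 0})"
    using assms by (simp add: test_function_def)
  hence "bounded {z. F z - G z \<noteq> 0}" by (rule bounded_subset) auto
  thus ?thesis using assms by (simp add: test_function_def continuous_on_diff)
qed

lemma distr_converges_limit_diff:
  assumes "distr_converges L \<Phi>" "test_function F" "test_function G"
  shows "\<Phi> (\<lambda>z. F z - G z) = \<Phi> F - \<Phi> G"
proof (rule LIMSEQ_unique)
  show "(\<lambda>n. empirical_mean (\<lambda>z. F z - G z) (L n)) \<longlonglongrightarrow> \<Phi> (\<lambda>z. F z - G z)"
    using assms test_function_diff by (simp add: distr_converges_def)
  show "(\<lambda>n. empirical_mean (\<lambda>z. F z - G z) (L n)) \<longlonglongrightarrow> \<Phi> F - \<Phi> G"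
    using assms unfolding empirical_mean_diff distr_converges_def by (intro tendsto_diff) auto
qed

lemma norm_empirical_mean_diff_le:
  assumes len: "length ys = length xs" and c: "0 \<le> c"
    and close: "\<And>i. i < length xs \<Longrightarrow> norm (F (of_real (ys ! i)) - F (of_real (xs ! i))) \<le> c"
  shows "norm (empirical_mean F (mset ys) - empirical_mean F (mset xs)) \<le> c"
proof -
  define m where "m = length xs"
  have "empirical_mean F (mset ys) - empirical_mean F (mset xs) =
      (\<Sum>i<m. F (of_real (ys ! i)) - F (of_real (xs ! i))) / of_nat m"
    unfolding empirical_mean_mset using len
    by (simp add: sum_list_sum_nth m_def lessThan_atLeast0 sum_subtractf diff_divide_distrib)
  also have "norm \<dots> \<le> (\<Sum>i<m. c) / real m"
    unfolding norm_divide norm_of_nat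
  proof (rule divide_right_mono[OF order_trans[OF norm_sum sum_mono]])
    fix i assume "i \<in> {..<m}"
    thus "norm (F (of_real (ys ! i)) - F (of_real (xs ! i))) \<le> c" by (simp add: m_def close)
  qed simp
  also have "\<dots> \<le> c" using c by (cases "m = 0") auto
  finally show ?thesis .
qed

lemma distr_converges_perturb:
  fixes xs ys :: "nat \<Rightarrow> real list"
  assumes len: "\<And>n. length (ys n) = length (xs n)" and \<delta>: "\<delta> \<longlonglongrightarrow> 0"
    and close: "\<And>n i. i < length (xs n) \<Longrightarrow> \<bar>xs n ! i - ys n ! i\<bar> \<le> \<delta> n"
    and conv: "distr_converges (\<lambda>n. mset (xs n)) \<Phi>"
  shows "distr_converges (\<lambda>n. mset (ys n)) \<Phi>"
  unfolding distr_converges_def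
proof (intro allI impI)
  fix F assume F: "test_function F"
  have "(\<lambda>n. empirical_mean F (mset (ys n)) - empirical_mean F (mset (xs n))) \<longlonglongrightarrow> 0"
  proof (rule LIMSEQ_I)
    fix e :: real assume e: "e > 0"
    obtain d where d: "d > 0" "\<And>x x'. dist x' x < d \<Longrightarrow> dist (F x') (F x) < e / 2"
      using test_function_uniformly_continuous[OF F] e unfolding uniformly_continuous_on_def
      by (metis half_gt_zero UNIV_I)
    obtain N where N: "\<And>n. n \<ge> N \<Longrightarrow> \<delta> n < d"
      using order_tendstoD(2)[OF \<delta> d(1)] by (auto simp: eventually_sequentially)
    have le_half: "norm (empirical_mean F (mset (ys n)) - empirical_mean F (mset (xs n))) \<le> e / 2"
      if "n \<ge> N" for n
    proof (rule norm_empirical_mean_diff_le[OF len])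
      fix i assume "i < length (xs n)"
      hence "dist (complex_of_real (ys n ! i)) (complex_of_real (xs n ! i)) < d"
        using close[of i n] N[OF that] by (simp add: dist_norm abs_minus_commute flip: of_real_diff)
      thus "norm (F (of_real (ys n ! i)) - F (of_real (xs n ! i))) \<le> e / 2"
        using d(2) by (simp add: dist_norm less_imp_le)
    qed (use e in simp)
    have "norm (empirical_mean F (mset (ys n)) - empirical_mean F (mset (xs n)) - 0) < e"
      if "n \<ge> N" for n
      using le_half[OF that] e by simp
    thus "\<exists>N. \<forall>n\<ge>N. norm (empirical_mean F (mset (ys n)) - empirical_mean F (mset (xs n)) - 0) < e"
      by blast
  qed
  moreover have "(\<lambda>n. empirical_mean F (mset (xs n))) \<longlonglongrightarrow> \<Phi> F"
    using conv F by (simp add: distr_converges_def)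
  ultimately have "(\<lambda>n. empirical_mean F (mset (xs n)) +
      (empirical_mean F (mset (ys n)) - empirical_mean F (mset (xs n)))) \<longlonglongrightarrow> \<Phi> F + 0"
    by (intro tendsto_add)
  thus "(\<lambda>n. empirical_mean F (mset (ys n))) \<longlonglongrightarrow> \<Phi> F" by simp
qed

definition bump_of :: "(real \<Rightarrow> real) \<Rightarrow> complex \<Rightarrow> complex" where
  "bump_of h z = complex_of_real (h (Re z) * max 0 (1 - \<bar>Im z\<bar>))"

lemma bump_of_real [simp]: "bump_of h (complex_of_real t) = complex_of_real (h t)"
  by (simp add: bump_of_def)

lemma bump_of_diff: "bump_of (\<lambda>t. h t - g t) = (\<lambda>z. bump_of h z - bump_of g z)"
  by (simp add: fun_eq_iff bump_of_def algebra_simps)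

lemma test_function_bump_of:
  assumes "continuous_on UNIV h" "\<And>t. t \<notin> {p..q} \<Longrightarrow> h t = 0"
  shows "test_function (bump_of h)"
proof -
  have "continuous_on UNIV (bump_of h)"
    unfolding bump_of_def[abs_def]
    by (intro continuous_intros continuous_on_compose2[OF assms(1)]) auto
  moreover have "{z. bump_of h z \<noteq> 0} \<subseteq> cbox (Complex p (-1)) (Complex q 1)"
  proof
    fix z assume "z \<in> {z. bump_of h z \<noteq> 0}"
    hence "h (Re z) \<noteq> 0" "max 0 (1 - \<bar>Im z\<bar>) \<noteq> 0" by (auto simp: bump_of_def)
    hence "Re z \<in> {p..q}" "\<bar>Im z\<bar> \<le> 1" using assms(2) by (force, linarith)
    thus "z \<in> cbox (Complex p (-1)) (Complex q 1)" by (auto simp: cbox_complex_eq)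
  qed
  hence "bounded {z. bump_of h z \<noteq> 0}" using bounded_cbox bounded_subset by blast
  ultimately show ?thesis unfolding test_function_def by simp
qed

lemma empirical_mean_bump_of:
  "empirical_mean (bump_of h) (mset xs) = complex_of_real (sum_list (map h xs) / real (length xs))"
proof -
  have "(\<Sum>l\<leftarrow>xs. complex_of_real (h l)) = complex_of_real (sum_list (map h xs))"
    by (induction xs) auto
  thus ?thesis unfolding empirical_mean_mset by simp
qed

definition trapezoid :: "real \<Rightarrow> real \<Rightarrow> real \<Rightarrow> real \<Rightarrow> real \<Rightarrow> real" where
  "trapezoid p q r s t = max 0 (min 1 (min ((t - p) / (q - p)) ((s - t) / (s - r))))"

lemma continuous_on_trapezoid: "p < q \<Longrightarrow> r < s \<Longrightarrow> continuous_on UNIV (trapezoid p q r s)"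
  unfolding trapezoid_def[abs_def] by (intro continuous_intros) auto

lemma trapezoid_nonneg: "0 \<le> trapezoid p q r s t"
  by (simp add: trapezoid_def)

lemma trapezoid_le_one: "trapezoid p q r s t \<le> 1"
  by (simp add: trapezoid_def)

lemma trapezoid_eq_0:
  assumes "p < q" "r < s" "t \<le> p \<or> s \<le> t"
  shows "trapezoid p q r s t = 0"
proof -
  have "(t - p) / (q - p) \<le> 0 \<or> (s - t) / (s - r) \<le> 0"
    using assms by (auto simp: divide_le_0_iff)
  thus ?thesis unfolding trapezoid_def by linarith
qed

lemma trapezoid_eq_1: "p < q \<Longrightarrow> r < s \<Longrightarrow> q \<le> t \<Longrightarrow> t \<le> r \<Longrightarrow> trapezoid p q r s t = 1"
  unfolding trapezoid_def by (auto simp: min_def max_def field_simps)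

lemma trapezoid_mono:
  assumes "0 < e" "u + e \<le> v - e"
  shows "trapezoid p q u (u + e) t \<le> trapezoid p q (v - e) v t"
proof -
  have "(u + e - t) / (u + e - u) \<le> (v - t) / (v - (v - e))"
    using assms by (simp add: divide_right_mono)
  thus ?thesis unfolding trapezoid_def by (intro max.mono min.mono) auto
qed

lemma test_function_trapezoid:
  assumes "p < q" "r < s"
  shows "test_function (bump_of (trapezoid p q r s))"
  using assms trapezoid_eq_0[OF assms]
  by (intro test_function_bump_of[where p = p and q = s] continuous_on_trapezoid) auto

section \<open>Sorted sequences with a common limit distribution\<close>

definition charges :: "((complex \<Rightarrow> complex) \<Rightarrow> complex) \<Rightarrow> real \<Rightarrow> real \<Rightarrow> bool" where
  "charges \<Phi> u v \<longleftrightarrow> (\<forall>G. test_function G \<and> (\<forall>t. 0 \<le> Re (G (complex_of_real t))) \<and>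
      (\<forall>t\<in>{u..v}. 1 \<le> Re (G (complex_of_real t))) \<longrightarrow> 0 < Re (\<Phi> G))"

text \<open>Two point sequences with the same limit distribution \<open>\<Phi>\<close> may still be sorted apart across a
  gap of the support of \<open>\<Phi>\<close>; the following condition excludes this.\<close>
definition counts_agree_off_support ::
  "((complex \<Rightarrow> complex) \<Rightarrow> complex) \<Rightarrow> (nat \<Rightarrow> real multiset) \<Rightarrow> (nat \<Rightarrow> real multiset) \<Rightarrow> bool" where
  "counts_agree_off_support \<Phi> X Y \<longleftrightarrow> (\<forall>u v. u < v \<longrightarrow> charges \<Phi> u v \<or>
     (\<exists>c\<in>{u..v}. eventually (\<lambda>n. size (filter_mset (\<lambda>t. t \<le> c) (X n)) =
                                 size (filter_mset (\<lambda>t. t \<le> c) (Y n))) sequentially))"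

lemma counts_agree_off_support_commute:
  "counts_agree_off_support \<Phi> X Y \<longleftrightarrow> counts_agree_off_support \<Phi> Y X"
  unfolding counts_agree_off_support_def by (simp add: eq_commute)

lemma sorted_count_less_at_nth:
  fixes xs ys :: "real list"
  assumes xs: "sorted xs" and ys: "sorted ys" and len: "length xs = length ys"
    and i: "i < length xs" "xs ! i \<le> u" "v \<le> ys ! i"
  shows "length (filter (\<lambda>t. t < v) ys) < length (filter (\<lambda>t. t \<le> u) xs)"
proof -
  have "j < i" if "j < length ys" "ys ! j < v" for j
  proof (rule ccontr)
    assume "\<not> j < i"
    hence "ys ! i \<le> ys ! j" using ys that(1) by (simp add: sorted_nth_mono)
    thus False using i(3) that(2) by simp
  qed
  hence "{j. j < length ys \<and> ys ! j < v} \<subseteq> {..<i}" by auto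
  hence "card {j. j < length ys \<and> ys ! j < v} \<le> i"
    by (metis card_lessThan card_mono finite_lessThan)
  moreover have "{..i} \<subseteq> {j. j < length xs \<and> xs ! j \<le> u}"
    using xs i by (auto intro: order_trans[OF sorted_nth_mono])
  hence "Suc i \<le> card {j. j < length xs \<and> xs ! j \<le> u}"
    by (metis card_atMost card_mono finite_Collect_conjI finite_Collect_less_nat)
  ultimately show ?thesis by (simp add: length_filter_conv_card)
qed

lemma length_filter_mono: "(\<And>x. P x \<Longrightarrow> Q x) \<Longrightarrow> length (filter P xs) \<le> length (filter Q xs)"
  by (induction xs) auto

lemma length_filter_le_sum_list:
  fixes h :: "real \<Rightarrow> real"
  assumes "\<And>t. t \<in> set xs \<Longrightarrow> 0 \<le> h t" "\<And>t. t \<in> set xs \<Longrightarrow> P t \<Longrightarrow> 1 \<le> h t"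
  shows "real (length (filter P xs)) \<le> sum_list (map h xs)"
  using assms
proof (induction xs)
  case (Cons a xs)
  have "real (length (filter P xs)) \<le> sum_list (map h xs)" "0 \<le> h a" "P a \<Longrightarrow> 1 \<le> h a"
    using Cons by auto
  thus ?case by auto
qed simp

lemma sum_list_le_length_filter:
  fixes h :: "real \<Rightarrow> real"
  assumes "\<And>t. t \<in> set xs \<Longrightarrow> h t \<le> 1" "\<And>t. t \<in> set xs \<Longrightarrow> \<not> P t \<Longrightarrow> h t \<le> 0"
  shows "sum_list (map h xs) \<le> real (length (filter P xs))"
  using assms
proof (induction xs)
  case (Cons a xs)
  have "sum_list (map h xs) \<le> real (length (filter P xs))" "h a \<le> 1" "\<not> P a \<Longrightarrow> h a \<le> 0"
    using Cons by auto
  thus ?case by auto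
qed simp

lemma trapezoids_charged:
  assumes conv: "distr_converges L \<Phi>" and ch: "charges \<Phi> (u + e) (v - e)"
    and e: "0 < e" "u + e \<le> v - e" and c: "c \<le> u"
  shows "Re (\<Phi> (bump_of (trapezoid (c - 2) (c - 1) u (u + e)))) <
    Re (\<Phi> (bump_of (trapezoid (c - 2) (c - 1) (v - e) v)))"
proof -
  define h1 where "h1 = trapezoid (c - 2) (c - 1) u (u + e)"
  define h2 where "h2 = trapezoid (c - 2) (c - 1) (v - e) v"
  have t1: "test_function (bump_of h1)" and t2: "test_function (bump_of h2)"
    unfolding h1_def h2_def using e by (auto intro: test_function_trapezoid)
  have "0 < Re (\<Phi> (bump_of (\<lambda>t. h2 t - h1 t)))"
  proof (rule ch[unfolded charges_def, rule_format], intro conjI allI ballI)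
    show "test_function (bump_of (\<lambda>t. h2 t - h1 t))"
      unfolding bump_of_diff by (intro test_function_diff t1 t2)
    show "0 \<le> Re (bump_of (\<lambda>t. h2 t - h1 t) (complex_of_real t))" for t
      using trapezoid_mono[OF e] by (simp add: h1_def h2_def)
    show "1 \<le> Re (bump_of (\<lambda>t. h2 t - h1 t) (complex_of_real t))" if "t \<in> {u + e..v - e}" for t
      using that e c trapezoid_eq_0[of "c - 2" "c - 1" u "u + e" t]
        trapezoid_eq_1[of "c - 2" "c - 1" "v - e" v t]
      by (simp add: h1_def h2_def)
  qed
  thus ?thesis
    unfolding bump_of_diff distr_converges_limit_diff[OF conv t2 t1] by (simp add: h1_def h2_def)
qed

text \<open>The trapezoids \<open>h\<^sub>1 \<le> h\<^sub>2\<close> dominate the counting functions of \<open>]-\<infinity>, u]\<close> from above and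
  of \<open>]-\<infinity>, v[\<close> from below, and \<open>h\<^sub>2 - h\<^sub>1\<close> is a test function that is charged by \<open>\<Phi>\<close>.\<close>
lemma eventually_count_less_if_charges:
  fixes xs ys :: "nat \<Rightarrow> real list"
  assumes len: "\<And>n. length (xs n) = length (ys n)"
    and cx: "distr_converges (\<lambda>n. mset (xs n)) \<Phi>" and cy: "distr_converges (\<lambda>n. mset (ys n)) \<Phi>"
    and ch: "charges \<Phi> (u + e) (v - e)" and e: "0 < e" "u + e \<le> v - e" and c: "c \<le> u"
  shows "eventually (\<lambda>n. set (xs n) \<subseteq> {c..} \<longrightarrow>
           length (filter (\<lambda>t. t \<le> u) (xs n)) < length (filter (\<lambda>t. t < v) (ys n))) sequentially"
proof -
  define h1 where "h1 = trapezoid (c - 2) (c - 1) u (u + e)"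
  define h2 where "h2 = trapezoid (c - 2) (c - 1) (v - e) v"
  have "test_function (bump_of h1)" "test_function (bump_of h2)"
    unfolding h1_def h2_def using e by (auto intro: test_function_trapezoid)
  hence "(\<lambda>n. Re (empirical_mean (bump_of h1) (mset (xs n))) -
      Re (empirical_mean (bump_of h2) (mset (ys n)))) \<longlonglongrightarrow> Re (\<Phi> (bump_of h1)) - Re (\<Phi> (bump_of h2))"
    using cx cy unfolding distr_converges_def by (intro tendsto_intros) auto
  moreover have "Re (\<Phi> (bump_of h1)) - Re (\<Phi> (bump_of h2)) < 0"
    using trapezoids_charged[OF cy ch e c] by (simp add: h1_def h2_def)
  ultimately have "eventually (\<lambda>n. Re (empirical_mean (bump_of h1) (mset (xs n))) -
      Re (empirical_mean (bump_of h2) (mset (ys n))) < 0) sequentially"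
    by (rule order_tendstoD(2))
  hence "eventually (\<lambda>n. sum_list (map h1 (xs n)) < sum_list (map h2 (ys n))) sequentially"
    by eventually_elim (simp add: empirical_mean_bump_of len divide_less_cancel)
  thus ?thesis
  proof (rule eventually_mono, intro impI)
    fix n assume less: "sum_list (map h1 (xs n)) < sum_list (map h2 (ys n))"
      and xs: "set (xs n) \<subseteq> {c..}"
    have "real (length (filter (\<lambda>t. t \<le> u) (xs n))) \<le> sum_list (map h1 (xs n))"
      using xs e
      by (intro length_filter_le_sum_list) (auto simp: h1_def trapezoid_nonneg trapezoid_eq_1)
    moreover have "sum_list (map h2 (ys n)) \<le> real (length (filter (\<lambda>t. t < v) (ys n)))"
      using e
      by (intro sum_list_le_length_filter) (auto simp: h2_def trapezoid_le_one trapezoid_eq_0)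
    ultimately show "length (filter (\<lambda>t. t \<le> u) (xs n)) < length (filter (\<lambda>t. t < v) (ys n))"
      using less by linarith
  qed
qed

lemma eventually_count_le:
  fixes xs ys :: "nat \<Rightarrow> real list"
  assumes len: "\<And>n. length (xs n) = length (ys n)"
    and cx: "distr_converges (\<lambda>n. mset (xs n)) \<Phi>" and cy: "distr_converges (\<lambda>n. mset (ys n)) \<Phi>"
    and agree: "counts_agree_off_support \<Phi> (\<lambda>n. mset (xs n)) (\<lambda>n. mset (ys n))"
    and e: "0 < e" and c: "c \<le> u" and uv: "u + 3 * e \<le> v"
  shows "eventually (\<lambda>n. set (xs n) \<subseteq> {c..} \<longrightarrow>
           length (filter (\<lambda>t. t \<le> u) (xs n)) \<le> length (filter (\<lambda>t. t < v) (ys n))) sequentially"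
proof -
  have "u + e < v - e" using e uv by simp
  with agree consider "charges \<Phi> (u + e) (v - e)"
    | c' where "c' \<in> {u + e..v - e}" "eventually (\<lambda>n. length (filter (\<lambda>t. t \<le> c') (xs n)) =
                  length (filter (\<lambda>t. t \<le> c') (ys n))) sequentially"
    unfolding counts_agree_off_support_def size_filter_mset_mset by blast
  thus ?thesis
  proof cases
    case 1
    have "u + e \<le> v - e" using e uv by simp
    from eventually_count_less_if_charges[OF len cx cy 1 e this c] show ?thesis
      by (auto elim: eventually_mono)
  next
    case 2
    have "length (filter (\<lambda>t. t \<le> u) xs) \<le> length (filter (\<lambda>t. t \<le> c') xs)"
      "length (filter (\<lambda>t. t \<le> c') ys) \<le> length (filter (\<lambda>t. t < v) ys)" for xs ys :: "real list"
      using 2(1) e by (auto intro!: length_filter_mono)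
    with 2(2) show ?thesis by (auto elim!: eventually_mono) (metis order_trans)
  qed
qed

lemma grid_points_between:
  fixes c d x y \<epsilon> :: real
  assumes \<epsilon>: "0 < \<epsilon>" and xy: "c \<le> x" "y \<le> d" "x + 5 * \<epsilon> \<le> y"
  obtains l1 l2 :: int where "l1 \<in> {0..\<lceil>(d - c) / \<epsilon>\<rceil>}" "l2 \<in> {0..\<lceil>(d - c) / \<epsilon>\<rceil>}"
    "x \<le> c + l1 * \<epsilon>" "c + l2 * \<epsilon> \<le> y" "c + l1 * \<epsilon> + 3 * \<epsilon> \<le> c + l2 * \<epsilon>"
proof
  define l1 where "l1 = \<lceil>(x - c) / \<epsilon>\<rceil>"
  define l2 where "l2 = \<lfloor>(y - c) / \<epsilon>\<rfloor>"
  have "(x - c) / \<epsilon> \<le> l1" "l1 < (x - c) / \<epsilon> + 1" "l2 \<le> (y - c) / \<epsilon>" "(y - c) / \<epsilon> < l2 + 1"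
    unfolding l1_def l2_def by linarith+
  hence l: "x - c \<le> l1 * \<epsilon>" "l1 * \<epsilon> < x - c + \<epsilon>" "l2 * \<epsilon> \<le> y - c" "y - c < l2 * \<epsilon> + \<epsilon>"
    using \<epsilon> by (simp_all add: field_simps)
  thus "x \<le> c + l1 * \<epsilon>" "c + l2 * \<epsilon> \<le> y" "c + l1 * \<epsilon> + 3 * \<epsilon> \<le> c + l2 * \<epsilon>"
    using xy by linarith+
  have "0 \<le> (x - c) / \<epsilon>" "0 \<le> (y - c) / \<epsilon>"
    "(x - c) / \<epsilon> \<le> (d - c) / \<epsilon>" "(y - c) / \<epsilon> \<le> (d - c) / \<epsilon>"
    using xy \<epsilon> by (simp_all add: divide_right_mono)
  thus "l1 \<in> {0..\<lceil>(d - c) / \<epsilon>\<rceil>}" "l2 \<in> {0..\<lceil>(d - c) / \<epsilon>\<rceil>}"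
    unfolding l1_def l2_def by (auto intro: ceiling_mono order_trans[OF floor_le_ceiling])
qed

lemma sorted_lists_eventually_below:
  fixes xs ys :: "nat \<Rightarrow> real list"
  assumes len: "\<And>n. length (xs n) = length (ys n)"
    and sx: "\<And>n. sorted (xs n)" and sy: "\<And>n. sorted (ys n)"
    and cx: "distr_converges (\<lambda>n. mset (xs n)) \<Phi>" and cy: "distr_converges (\<lambda>n. mset (ys n)) \<Phi>"
    and agree: "counts_agree_off_support \<Phi> (\<lambda>n. mset (xs n)) (\<lambda>n. mset (ys n))"
    and bnd: "eventually (\<lambda>n. set (xs n) \<union> set (ys n) \<subseteq> {c..d}) sequentially"
    and e: "0 < e"
  shows "eventually (\<lambda>n. \<forall>i<length (xs n). ys n ! i - xs n ! i < e) sequentially"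
proof -
  define \<epsilon> where "\<epsilon> = e / 5"
  have \<epsilon>: "0 < \<epsilon>" using e by (simp add: \<epsilon>_def)
  define L where "L = {0..\<lceil>(d - c) / \<epsilon>\<rceil>}"
  define pt where "pt l = c + of_int l * \<epsilon>" for l
  have "eventually (\<lambda>n. \<forall>l1\<in>L. \<forall>l2\<in>L. pt l1 + 3 * \<epsilon> \<le> pt l2 \<longrightarrow> set (xs n) \<subseteq> {c..} \<longrightarrow>
      length (filter (\<lambda>t. t \<le> pt l1) (xs n)) \<le> length (filter (\<lambda>t. t < pt l2) (ys n))) sequentially"
  proof (intro eventually_ball_finite ballI)
    fix l1 l2 assume l1: "l1 \<in> L"
    show "eventually (\<lambda>n. pt l1 + 3 * \<epsilon> \<le> pt l2 \<longrightarrow> set (xs n) \<subseteq> {c..} \<longrightarrow>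
        length (filter (\<lambda>t. t \<le> pt l1) (xs n)) \<le> length (filter (\<lambda>t. t < pt l2) (ys n)))
        sequentially"
    proof (cases "pt l1 + 3 * \<epsilon> \<le> pt l2")
      case True
      have "c \<le> pt l1" using l1 \<epsilon> by (simp add: L_def pt_def)
      from eventually_count_le[OF len cx cy agree \<epsilon> this True] show ?thesis by simp
    qed simp
  qed (simp_all add: L_def)
  with bnd show ?thesis
  proof eventually_elim
    case (elim n)
    show ?case
    proof (intro allI impI, rule ccontr)
      fix i assume i: "i < length (xs n)" and "\<not> ys n ! i - xs n ! i < e"
      hence "xs n ! i + 5 * \<epsilon> \<le> ys n ! i" by (simp add: \<epsilon>_def)
      moreover have "xs n ! i \<in> set (xs n)" "ys n ! i \<in> set (ys n)"
        using i len[of n] by simp_all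
      hence "c \<le> xs n ! i" "ys n ! i \<le> d" using elim(1) by auto
      ultimately obtain l1 l2 where l: "l1 \<in> L" "l2 \<in> L"
        "xs n ! i \<le> pt l1" "pt l2 \<le> ys n ! i" "pt l1 + 3 * \<epsilon> \<le> pt l2"
        using grid_points_between[OF \<epsilon>] unfolding L_def pt_def by metis
      have "length (filter (\<lambda>t. t < pt l2) (ys n)) < length (filter (\<lambda>t. t \<le> pt l1) (xs n))"
        using sorted_count_less_at_nth[OF sx sy len i l(3,4)] .
      moreover have "set (xs n) \<subseteq> {c..}" using elim(1) by auto
      ultimately show False using elim(2) l by fastforce
    qed
  qed
qed

theorem sorted_lists_eventually_close:
  fixes xs ys :: "nat \<Rightarrow> real list"
  assumes len: "\<And>n. length (xs n) = length (ys n)"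
    and sx: "\<And>n. sorted (xs n)" and sy: "\<And>n. sorted (ys n)"
    and cx: "distr_converges (\<lambda>n. mset (xs n)) \<Phi>" and cy: "distr_converges (\<lambda>n. mset (ys n)) \<Phi>"
    and agree: "counts_agree_off_support \<Phi> (\<lambda>n. mset (xs n)) (\<lambda>n. mset (ys n))"
    and bnd: "eventually (\<lambda>n. set (xs n) \<union> set (ys n) \<subseteq> {c..d}) sequentially"
    and e: "0 < e"
  shows "eventually (\<lambda>n. \<forall>i<length (xs n). \<bar>xs n ! i - ys n ! i\<bar> < e) sequentially"
proof -
  have "eventually (\<lambda>n. \<forall>i<length (xs n). ys n ! i - xs n ! i < e) sequentially"
    by (rule sorted_lists_eventually_below[OF len sx sy cx cy agree bnd e])
  moreover have "eventually (\<lambda>n. \<forall>i<length (ys n). xs n ! i - ys n ! i < e) sequentially"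
    using agree bnd
    by (intro sorted_lists_eventually_below[OF len[symmetric] sy sx cy cx _ _ e])
       (simp_all add: counts_agree_off_support_commute Un_commute)
  ultimately show ?thesis
    by eventually_elim (auto simp: len abs_less_iff)
qed

lemma tendsto_Max_abs_zero:
  fixes X :: "nat \<Rightarrow> 'a \<Rightarrow> real"
  assumes fin: "\<And>n. finite (S n)" and ne: "eventually (\<lambda>n. S n \<noteq> {}) sequentially"
    and small: "\<And>e. 0 < e \<Longrightarrow> eventually (\<lambda>n. \<forall>i\<in>S n. \<bar>X n i\<bar> < e) sequentially"
  shows "(\<lambda>n. Max ((\<lambda>i. \<bar>X n i\<bar>) ` S n)) \<longlonglongrightarrow> 0"
proof (rule order_tendstoI)
  fix e :: real assume "e < 0"
  from ne show "eventually (\<lambda>n. e < Max ((\<lambda>i. \<bar>X n i\<bar>) ` S n)) sequentially"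
    by eventually_elim (use \<open>e < 0\<close> in \<open>force simp: fin Max_gr_iff\<close>)
next
  fix e :: real assume "0 < e"
  from small[OF this] ne show "eventually (\<lambda>n. Max ((\<lambda>i. \<bar>X n i\<bar>) ` S n) < e) sequentially"
    by eventually_elim (auto simp: fin)
qed

section \<open>Riemann sums on asymptotically uniform grids\<close>

definition local_sup :: "real \<Rightarrow> real \<Rightarrow> (real \<Rightarrow> real) \<Rightarrow> real \<Rightarrow> real \<Rightarrow> real" where
  "local_sup a b h x r = Sup (h ` ({a..b} \<inter> ball x r))"

text \<open>Weak convergence of measures only applies to Borel integrands. The upper envelope of \<open>h\<close> is
  upper semicontinuous, hence Borel, dominates \<open>h\<close> on \<open>[a, b]\<close> and agrees with \<open>h\<close> wherever
  \<open>h\<close> is continuous.\<close>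
definition upper_envelope :: "real \<Rightarrow> real \<Rightarrow> (real \<Rightarrow> real) \<Rightarrow> real \<Rightarrow> real" where
  "upper_envelope a b h x = (INF r\<in>{0<..}. local_sup a b h (clamp a b x) r)"

definition lower_envelope :: "real \<Rightarrow> real \<Rightarrow> (real \<Rightarrow> real) \<Rightarrow> real \<Rightarrow> real" where
  "lower_envelope a b h x = - upper_envelope a b (\<lambda>t. - h t) x"

lemma clamp_in_Icc: "a \<le> b \<Longrightarrow> clamp a b x \<in> {a..b}"
  for a b x :: real
  using clamp_in_interval[of a b x] by simp

lemma clamp_eq_self: "x \<in> {a..b} \<Longrightarrow> clamp a b x = x"
  for a b x :: real
  using clamp_cancel_cbox[of x a b] by simp

locale bounded_on_Icc =
  fixes a b B :: real and h :: "real \<Rightarrow> real"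
  assumes ab: "a < b" and hb: "\<And>x. x \<in> {a..b} \<Longrightarrow> \<bar>h x\<bar> \<le> B"
begin

lemma bdd_above_image_ball: "bdd_above (h ` ({a..b} \<inter> ball x r))"
  using hb by (intro bdd_aboveI[of _ B]) (auto simp: abs_le_iff)

lemma local_sup_ge: "x \<in> {a..b} \<Longrightarrow> 0 < r \<Longrightarrow> h x \<le> local_sup a b h x r"
  unfolding local_sup_def by (rule cSup_upper[OF _ bdd_above_image_ball]) auto

lemma local_sup_le:
  "x \<in> {a..b} \<Longrightarrow> 0 < r \<Longrightarrow> (\<And>y. y \<in> {a..b} \<Longrightarrow> dist y x < r \<Longrightarrow> h y \<le> c) \<Longrightarrow>
    local_sup a b h x r \<le> c"
  unfolding local_sup_def by (rule cSup_least) (auto simp: dist_commute)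

lemma local_sup_mono:
  "y \<in> {a..b} \<Longrightarrow> 0 < r' \<Longrightarrow> ball y r' \<subseteq> ball x r \<Longrightarrow> local_sup a b h y r' \<le> local_sup a b h x r"
  unfolding local_sup_def by (rule cSup_subset_mono) (auto intro: bdd_above_image_ball)

lemma upper_envelope_le_local_sup:
  assumes "0 < r"
  shows "upper_envelope a b h x \<le> local_sup a b h (clamp a b x) r"
proof -
  have "bdd_below ((\<lambda>r. local_sup a b h (clamp a b x) r) ` {0<..})"
    using local_sup_ge clamp_in_Icc ab
    by (intro bdd_belowI[of _ "h (clamp a b x)"]) auto
  thus ?thesis unfolding upper_envelope_def by (rule cINF_lower) (use assms in auto)
qed

lemma upper_envelope_ge: "x \<in> {a..b} \<Longrightarrow> h x \<le> upper_envelope a b h x"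
  unfolding upper_envelope_def
  by (rule cINF_greatest) (auto simp: clamp_eq_self intro: local_sup_ge)

lemma upper_envelope_clamp: "upper_envelope a b h (clamp a b x) = upper_envelope a b h x"
  using clamp_eq_self[OF clamp_in_Icc[of a b x]] ab by (simp add: upper_envelope_def)

lemma abs_upper_envelope_le: "\<bar>upper_envelope a b h x\<bar> \<le> B"
proof -
  have x: "clamp a b x \<in> {a..b}" using ab by (rule clamp_in_Icc[OF less_imp_le])
  have "h (clamp a b x) \<le> upper_envelope a b h x"
    using upper_envelope_ge[OF x] by (simp add: upper_envelope_clamp)
  moreover have "upper_envelope a b h x \<le> B"
    using upper_envelope_le_local_sup[of 1 x] local_sup_le[OF x, of 1 B] hb by force
  ultimately show ?thesis using hb[OF x] by (simp add: abs_le_iff)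
qed

lemma borel_measurable_upper_envelope: "upper_envelope a b h \<in> borel_measurable borel"
  unfolding borel_measurable_iff_less
proof
  fix c
  have "open {x. upper_envelope a b h x < c}"
    unfolding open_dist
  proof (intro ballI)
    fix x assume "x \<in> {x. upper_envelope a b h x < c}"
    hence "Inf ((\<lambda>r. local_sup a b h (clamp a b x) r) ` {0<..}) < c"
      by (simp add: upper_envelope_def)
    then obtain r where r: "0 < r" "local_sup a b h (clamp a b x) r < c"
      using cInf_lessD[of "(\<lambda>r. local_sup a b h (clamp a b x) r) ` {0<..}" c] by force
    have "upper_envelope a b h y < c" if "dist y x < r / 2" for y
    proof -
      have "dist (clamp a b y) (clamp a b x) < r / 2"
        using dist_clamps_le_dist_args[of a b y x] that by linarith
      hence "ball (clamp a b y) (r / 2) \<subseteq> ball (clamp a b x) r"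
        by (simp add: ball_subset_ball_iff dist_commute)
      hence "local_sup a b h (clamp a b y) (r / 2) \<le> local_sup a b h (clamp a b x) r"
        using ab r by (intro local_sup_mono clamp_in_Icc) auto
      thus ?thesis using upper_envelope_le_local_sup[of "r / 2" y] r by simp
    qed
    thus "\<exists>e>0. \<forall>y. dist y x < e \<longrightarrow> y \<in> {x. upper_envelope a b h x < c}"
      using r by (intro exI[of _ "r / 2"]) auto
  qed
  thus "{x \<in> space borel. upper_envelope a b h x < c} \<in> sets borel" by simp
qed

lemma upper_envelope_eq:
  assumes x: "x \<in> {a..b}" and hc: "continuous (at x within {a..b}) h"
  shows "upper_envelope a b h x = h x"
proof (rule antisym[OF field_le_epsilon upper_envelope_ge[OF x]])
  fix e :: real assume "0 < e"
  then obtain d where d: "0 < d" "\<And>y. y \<in> {a..b} \<Longrightarrow> dist y x < d \<Longrightarrow> dist (h y) (h x) < e"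
    using hc unfolding continuous_within_eps_delta by metis
  have "h y \<le> h x + e" if "y \<in> {a..b}" "dist y x < d" for y
    using d(2)[OF that] by (simp add: dist_real_def abs_less_iff)
  hence "local_sup a b h x d \<le> h x + e" by (rule local_sup_le[OF x d(1)])
  thus "upper_envelope a b h x \<le> h x + e"
    using upper_envelope_le_local_sup[OF d(1), of x] x by (simp add: clamp_eq_self)
qed

lemma isCont_upper_envelope:
  assumes x: "x \<in> {a<..<b}" and hc: "continuous (at x within {a..b}) h"
  shows "isCont (upper_envelope a b h) x"
  unfolding continuous_at_eps_delta
proof (intro allI impI)
  fix e :: real assume e: "0 < e"
  obtain d where d: "0 < d" "\<And>y. y \<in> {a..b} \<Longrightarrow> dist y x < d \<Longrightarrow> dist (h y) (h x) < e / 2"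
    using hc e unfolding continuous_within_eps_delta by (metis half_gt_zero)
  have xab: "x \<in> {a..b}" using x by simp
  have Ux: "upper_envelope a b h x = h x" by (rule upper_envelope_eq[OF xab hc])
  have "h y \<le> h x + e / 2" if "y \<in> {a..b}" "dist y x < d" for y
    using d(2)[OF that] unfolding dist_real_def abs_less_iff by linarith
  hence sup_x: "local_sup a b h x d \<le> h x + e / 2" by (rule local_sup_le[OF xab d(1)])
  define d' where "d' = min (d / 2) (min (x - a) (b - x))"
  have "dist (upper_envelope a b h y) (upper_envelope a b h x) < e" if y: "dist y x < d'" for y
  proof -
    have yab: "y \<in> {a..b}" and yx: "dist y x < d / 2"
      using y by (auto simp: d'_def dist_real_def abs_less_iff)
    have "ball y (d / 2) \<subseteq> ball x d" using yx by (simp add: ball_subset_ball_iff dist_commute)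
    hence "upper_envelope a b h y \<le> h x + e / 2"
      using upper_envelope_le_local_sup[of "d / 2" y] local_sup_mono[OF yab, of "d / 2" x d]
        sup_x d(1)
      by (simp add: clamp_eq_self[OF yab])
    moreover have "dist (h y) (h x) < e / 2" using d(1) yx by (intro d(2)[OF yab]) simp
    hence "h x - e / 2 < upper_envelope a b h y"
      using upper_envelope_ge[OF yab] unfolding dist_real_def abs_less_iff by linarith
    ultimately show ?thesis using Ux e by (simp add: dist_real_def abs_less_iff)
  qed
  moreover have "0 < d'" using d x by (simp add: d'_def)
  ultimately show "\<exists>d>0. \<forall>y. dist y x < d \<longrightarrow>
      dist (upper_envelope a b h y) (upper_envelope a b h x) < e"
    by blast
qed

lemma bounded_on_Icc_uminus: "bounded_on_Icc a b B (\<lambda>x. - h x)"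
  using ab hb by unfold_locales auto

lemma lower_envelope_le: "x \<in> {a..b} \<Longrightarrow> lower_envelope a b h x \<le> h x"
  using bounded_on_Icc.upper_envelope_ge[OF bounded_on_Icc_uminus, of x]
  by (simp add: lower_envelope_def)

lemma abs_lower_envelope_le: "\<bar>lower_envelope a b h x\<bar> \<le> B"
  using bounded_on_Icc.abs_upper_envelope_le[OF bounded_on_Icc_uminus]
  by (simp add: lower_envelope_def)

lemma borel_measurable_lower_envelope: "lower_envelope a b h \<in> borel_measurable borel"
  unfolding lower_envelope_def[abs_def]
  using bounded_on_Icc.borel_measurable_upper_envelope[OF bounded_on_Icc_uminus] by measurable

lemma lower_envelope_eq:
  "x \<in> {a..b} \<Longrightarrow> continuous (at x within {a..b}) h \<Longrightarrow> lower_envelope a b h x = h x"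
  using bounded_on_Icc.upper_envelope_eq[OF bounded_on_Icc_uminus, of x]
  by (simp add: lower_envelope_def continuous_minus)

lemma isCont_lower_envelope:
  "x \<in> {a<..<b} \<Longrightarrow> continuous (at x within {a..b}) h \<Longrightarrow> isCont (lower_envelope a b h) x"
  unfolding lower_envelope_def[abs_def]
  by (intro continuous_minus bounded_on_Icc.isCont_upper_envelope[OF bounded_on_Icc_uminus])
     (auto intro: continuous_minus)

end

definition uniform_cdf :: "real \<Rightarrow> real \<Rightarrow> real \<Rightarrow> real" where
  "uniform_cdf a b t = max 0 (min 1 ((t - a) / (b - a)))"

lemma isCont_uniform_cdf: "isCont (uniform_cdf a b) t"
  unfolding uniform_cdf_def divide_inverse by (intro continuous_intros)

lemma set_real_le_eq_floor: "{i \<in> {1..m}. real i \<le> r} = {1..min m (nat \<lfloor>r\<rfloor>)}"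
proof -
  have "real i \<le> r \<longleftrightarrow> i \<le> nat \<lfloor>r\<rfloor>" if "i \<ge> 1" for i :: nat
  proof (cases "\<lfloor>r\<rfloor> \<ge> 0")
    case True
    thus ?thesis by (simp add: le_nat_iff le_floor_iff)
  next
    case False
    thus ?thesis using that by linarith
  qed
  thus ?thesis by auto
qed

lemma card_uniform_grid_le:
  assumes ab: "a < b" and m: "0 < m"
  shows "\<bar>real (card {i \<in> {1..m}. a + real i * (b - a) / real m \<le> s}) / real m - uniform_cdf a b s\<bar>
           \<le> 1 / real m"
proof -
  define r where "r = (s - a) * real m / (b - a)"
  have "a + real i * (b - a) / real m \<le> s \<longleftrightarrow> real i \<le> r" for i
    using ab m by (simp add: r_def field_simps)
  hence card: "card {i \<in> {1..m}. a + real i * (b - a) / real m \<le> s} = min m (nat \<lfloor>r\<rfloor>)"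
    using set_real_le_eq_floor[of m r] by simp
  have cdf: "uniform_cdf a b s = max 0 (min (real m) r) / real m"
    using m ab by (auto simp: uniform_cdf_def r_def min_def max_def field_simps)
  have "\<bar>real (min m (nat \<lfloor>r\<rfloor>)) - max 0 (min (real m) r)\<bar> \<le> 1"
    by (cases "r < 0"; cases "real m \<le> r") (auto simp: min_def max_def, linarith+)
  hence "\<bar>real (min m (nat \<lfloor>r\<rfloor>)) / real m - max 0 (min (real m) r) / real m\<bar> \<le> 1 / real m"
    using m by (simp add: diff_divide_distrib[symmetric] abs_divide divide_right_mono)
  thus ?thesis unfolding card cdf .
qed

lemma card_grid_le_bounds:
  fixes x :: "nat \<Rightarrow> real"
  assumes ab: "a < b" and m: "0 < m"
    and close: "\<And>i. i \<in> {1..m} \<Longrightarrow> \<bar>x i - (a + real i * (b - a) / real m)\<bar> \<le> \<eta>"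
  shows "uniform_cdf a b (t - \<eta>) - 1 / real m \<le> real (card {i \<in> {1..m}. x i \<le> t}) / real m"
    and "real (card {i \<in> {1..m}. x i \<le> t}) / real m \<le> uniform_cdf a b (t + \<eta>) + 1 / real m"
proof -
  define K where "K s = real (card {i \<in> {1..m}. a + real i * (b - a) / real m \<le> s}) / real m" for s
  have "{i \<in> {1..m}. a + real i * (b - a) / real m \<le> t - \<eta>} \<subseteq> {i \<in> {1..m}. x i \<le> t}"
    "{i \<in> {1..m}. x i \<le> t} \<subseteq> {i \<in> {1..m}. a + real i * (b - a) / real m \<le> t + \<eta>}"
    using close by (force simp: abs_le_iff)+
  hence "K (t - \<eta>) \<le> real (card {i \<in> {1..m}. x i \<le> t}) / real m"
    "real (card {i \<in> {1..m}. x i \<le> t}) / real m \<le> K (t + \<eta>)"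
    unfolding K_def by (auto intro!: divide_right_mono card_mono)
  moreover have "\<bar>K s - uniform_cdf a b s\<bar> \<le> 1 / real m" for s
    unfolding K_def by (rule card_uniform_grid_le[OF ab m])
  ultimately show
    "uniform_cdf a b (t - \<eta>) - 1 / real m \<le> real (card {i \<in> {1..m}. x i \<le> t}) / real m"
    "real (card {i \<in> {1..m}. x i \<le> t}) / real m \<le> uniform_cdf a b (t + \<eta>) + 1 / real m"
    by (smt (verit))+
qed

lemma asym_unif_grid_eventually_pos:
  "asym_unif_grid a b m x \<Longrightarrow> eventually (\<lambda>n. 0 < m n) sequentially"
  unfolding asym_unif_grid_def filterlim_at_top by (auto elim: eventually_mono[OF spec[of _ 1]])

lemma uniform_grid_in_Icc:
  assumes "a \<le> b" "i \<in> {1..m}"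
  shows "a + real i * (b - a) / real m \<in> {a..b}"
proof -
  have "real i * (b - a) \<le> real m * (b - a)" "0 < real m"
    using assms by (auto intro: mult_right_mono)
  hence "real i * (b - a) / real m \<le> b - a" by (simp add: pos_divide_le_eq mult.commute)
  thus ?thesis using assms by simp
qed

lemma asym_unif_grid_uniform:
  assumes "filterlim m at_top sequentially"
  shows "asym_unif_grid a b m (\<lambda>n i. a + real i * (b - a) / real (m n))"
  unfolding asym_unif_grid_def
proof
  have "eventually (\<lambda>n. 1 \<le> m n) sequentially" using assms by (simp add: filterlim_at_top)
  hence "eventually (\<lambda>n. 0 = Max ((\<lambda>i. \<bar>a + real i * (b - a) / real (m n) -
      (a + real i * (b - a) / real (m n))\<bar>) ` {1..m n})) sequentially"
    by eventually_elim (simp add: image_constant_conv)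
  thus "(\<lambda>n. Max ((\<lambda>i. \<bar>a + real i * (b - a) / real (m n) -
      (a + real i * (b - a) / real (m n))\<bar>) ` {1..m n})) \<longlonglongrightarrow> 0"
    by (rule Lim_transform_eventually[OF tendsto_const])
qed (fact assms)

lemma asym_unif_grid_cdf:
  fixes x :: "nat \<Rightarrow> nat \<Rightarrow> real"
  assumes ab: "a < b" and grid: "asym_unif_grid a b m x"
  shows "(\<lambda>n. real (card {i \<in> {1..m n}. x n i \<le> t}) / real (m n)) \<longlonglongrightarrow> uniform_cdf a b t"
proof -
  define \<eta> where "\<eta> n = Max ((\<lambda>i. \<bar>x n i - (a + real i * (b - a) / real (m n))\<bar>) ` {1..m n})" for n
  have \<eta>: "\<eta> \<longlonglongrightarrow> 0" and m: "filterlim m at_top sequentially"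
    using grid unfolding asym_unif_grid_def \<eta>_def[abs_def] by auto
  have close: "\<bar>x n i - (a + real i * (b - a) / real (m n))\<bar> \<le> \<eta> n" if "i \<in> {1..m n}" for n i
    unfolding \<eta>_def using that by (intro Max_ge) auto
  have inv: "(\<lambda>n. 1 / real (m n)) \<longlonglongrightarrow> 0"
    using tendsto_inverse_0_at_top[OF filterlim_compose[OF filterlim_real_sequentially m]]
    by (simp add: divide_inverse o_def)
  have "(\<lambda>n. uniform_cdf a b (t - \<eta> n)) \<longlonglongrightarrow> uniform_cdf a b t"
    using tendsto_diff[OF tendsto_const \<eta>, of t]
    by (intro isCont_tendsto_compose[OF isCont_uniform_cdf]) simp
  from tendsto_diff[OF this inv]
  have lo: "(\<lambda>n. uniform_cdf a b (t - \<eta> n) - 1 / real (m n)) \<longlonglongrightarrow> uniform_cdf a b t" by simp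
  have "(\<lambda>n. uniform_cdf a b (t + \<eta> n)) \<longlonglongrightarrow> uniform_cdf a b t"
    using tendsto_add[OF tendsto_const \<eta>, of t]
    by (intro isCont_tendsto_compose[OF isCont_uniform_cdf]) simp
  from tendsto_add[OF this inv]
  have hi: "(\<lambda>n. uniform_cdf a b (t + \<eta> n) + 1 / real (m n)) \<longlonglongrightarrow> uniform_cdf a b t" by simp
  have pos: "eventually (\<lambda>n. 0 < m n) sequentially" by (rule asym_unif_grid_eventually_pos[OF grid])
  show ?thesis
  proof (rule tendsto_sandwich[OF _ _ lo hi])
    show "eventually (\<lambda>n. uniform_cdf a b (t - \<eta> n) - 1 / real (m n) \<le>
        real (card {i \<in> {1..m n}. x n i \<le> t}) / real (m n)) sequentially"
      using pos by (rule eventually_mono) (rule card_grid_le_bounds(1)[OF ab _ close])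
    show "eventually (\<lambda>n. real (card {i \<in> {1..m n}. x n i \<le> t}) / real (m n) \<le>
        uniform_cdf a b (t + \<eta> n) + 1 / real (m n)) sequentially"
      using pos by (rule eventually_mono) (rule card_grid_le_bounds(2)[OF ab _ close])
  qed
qed

definition grid_measure :: "nat \<Rightarrow> (nat \<Rightarrow> real) \<Rightarrow> real measure" where
  "grid_measure m x = distr (uniform_count_measure {1..m}) borel x"

lemma measurable_grid_points: "x \<in> measurable (uniform_count_measure {1..m}) borel"
  by (subst measurable_cong_sets[OF sets_uniform_count_measure_count_space refl])
     (simp add: measurable_count_space_eq1)

lemma real_distribution_grid_measure:
  assumes "0 < m"
  shows "real_distribution (grid_measure m x)"
proof -
  have "prob_space (uniform_count_measure {1..m})"
    using assms by (intro prob_space_uniform_count_measure) auto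
  hence "prob_space (grid_measure m x)"
    unfolding grid_measure_def by (rule prob_space.prob_space_distr[OF _ measurable_grid_points])
  thus ?thesis by (simp add: real_distribution_def real_distribution_axioms_def grid_measure_def)
qed

lemma cdf_grid_measure:
  "0 < m \<Longrightarrow> cdf (grid_measure m x) t = real (card {i \<in> {1..m}. x i \<le> t}) / real m"
proof -
  have "cdf (grid_measure m x) t = measure (uniform_count_measure {1..m}) (x -` {..t} \<inter> {1..m})"
    unfolding cdf_def grid_measure_def
    by (subst measure_distr[OF measurable_grid_points]) (auto simp: space_uniform_count_measure)
  also have "x -` {..t} \<inter> {1..m} = {i \<in> {1..m}. x i \<le> t}" by auto
  also have "measure (uniform_count_measure {1..m}) \<dots> = real (card {i \<in> {1..m}. x i \<le> t}) / real m"
    by (subst measure_uniform_count_measure) auto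
  finally show ?thesis .
qed

lemma integral_grid_measure:
  "U \<in> borel_measurable borel \<Longrightarrow> integral\<^sup>L (grid_measure m x) U = (\<Sum>i=1..m. U (x i)) / real m"
  unfolding grid_measure_def
  by (subst integral_distr[OF measurable_grid_points])
     (simp_all add: integral_uniform_count_measure)

lemma uniform_measure_Icc_eq_density:
  assumes "a < b"
  shows "uniform_measure lborel {a..b} =
    density lborel (\<lambda>t. ennreal (indicator {a..b} t / (b - a)))"
proof -
  have "1 / ennreal (b - a) = ennreal (1 / (b - a))"
    using divide_ennreal[of 1 "b - a"] assms by simp
  thus ?thesis
    unfolding uniform_measure_def using assms
    by (intro arg_cong2[where f = density] refl ext) (auto simp: indicator_def)
qed

lemma real_distribution_uniform_Icc: "a < b \<Longrightarrow> real_distribution (uniform_measure lborel {a..b})"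
  unfolding real_distribution_def real_distribution_axioms_def
  by (auto intro!: prob_space_uniform_measure)

lemma cdf_uniform_Icc: "a < b \<Longrightarrow> cdf (uniform_measure lborel {a..b}) t = uniform_cdf a b t"
proof -
  assume ab: "a < b"
  have "{a..b} \<inter> {..t} = {a..min b t}" by auto
  thus ?thesis
    unfolding cdf_def using ab
    by (auto simp: emeasure_lborel_Icc uniform_cdf_def min_def max_def field_simps)
qed

lemma integrable_on_Icc_bounded_borel:
  fixes U :: "real \<Rightarrow> real"
  assumes "U \<in> borel_measurable borel" "\<And>t. \<bar>U t\<bar> \<le> B"
  shows "set_integrable lborel {a..b} U" and "U integrable_on {a..b}"
proof -
  show si: "set_integrable lborel {a..b} U"
    unfolding set_integrable_def
    by (rule integrableI_bounded_set_indicator[where B = B])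
       (use assms in \<open>auto simp: emeasure_lborel_Icc_eq\<close>)
  show "U integrable_on {a..b}" using set_borel_integral_eq_integral(1)[OF si] .
qed

lemma integral_uniform_Icc:
  fixes U :: "real \<Rightarrow> real"
  assumes ab: "a < b" and [measurable]: "U \<in> borel_measurable borel" and "\<And>t. \<bar>U t\<bar> \<le> B"
  shows "integral\<^sup>L (uniform_measure lborel {a..b}) U = integral {a..b} U / (b - a)"
proof -
  have "integral\<^sup>L (uniform_measure lborel {a..b}) U =
      (LINT t|lborel. (indicator {a..b} t / (b - a)) *\<^sub>R U t)"
    unfolding uniform_measure_Icc_eq_density[OF ab] by (rule integral_density) (use ab in auto)
  also have "\<dots> = (LINT t|lborel. indicator {a..b} t *\<^sub>R U t) / (b - a)"
    by (simp add: divide_inverse mult.commute mult.left_commute flip: integral_mult_right_zero)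
  also have "(LINT t|lborel. indicator {a..b} t *\<^sub>R U t) = integral {a..b} U"
    using set_borel_integral_eq_integral(2)[OF integrable_on_Icc_bounded_borel(1)[OF assms(2,3)]]
    by (simp add: set_lebesgue_integral_def)
  finally show ?thesis .
qed

text \<open>The empirical measures of an asymptotically uniform grid converge weakly to the uniform
  distribution on \<open>[a, b]\<close>, and weak convergence passes to bounded integrands that are
  continuous almost everywhere.\<close>
lemma riemann_sums_tendsto_borel:
  fixes U :: "real \<Rightarrow> real"
  assumes ab: "a < b" and Um[measurable]: "U \<in> borel_measurable borel" and Ub: "\<And>t. \<bar>U t\<bar> \<le> B"
    and Uc: "AE t in lborel. t \<in> {a<..<b} \<longrightarrow> isCont U t"
    and grid: "asym_unif_grid a b m x"
  shows "(\<lambda>n. (\<Sum>i=1..m n. U (x n i)) / real (m n)) \<longlonglongrightarrow> integral {a..b} U / (b - a)"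
proof -
  define M where "M = uniform_measure lborel {a..b}"
  define \<mu> where "\<mu> n = (if m n = 0 then M else grid_measure (m n) (x n))" for n
  have M: "real_distribution M" unfolding M_def by (rule real_distribution_uniform_Icc[OF ab])
  have \<mu>: "real_distribution (\<mu> n)" for n
    using M real_distribution_grid_measure[of "m n" "x n"] by (simp add: \<mu>_def)
  have pos: "eventually (\<lambda>n. 0 < m n) sequentially" by (rule asym_unif_grid_eventually_pos[OF grid])
  have wc: "weak_conv_m \<mu> M"
    unfolding weak_conv_m_def weak_conv_def
  proof (intro allI impI)
    fix t
    have "eventually (\<lambda>n. real (card {i \<in> {1..m n}. x n i \<le> t}) / real (m n) = cdf (\<mu> n) t)
        sequentially"
      using pos by eventually_elim (simp add: \<mu>_def cdf_grid_measure)
    thus "(\<lambda>n. cdf (\<mu> n) t) \<longlonglongrightarrow> cdf M t"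
      unfolding M_def cdf_uniform_Icc[OF ab]
      by (rule Lim_transform_eventually[OF asym_unif_grid_cdf[OF ab grid]])
  qed
  have disc: "emeasure M {t. \<not> isCont U t} = 0"
  proof (cases "{t. \<not> isCont U t} \<in> sets M")
    case True
    have "AE t in lborel. 0 < ennreal (indicator {a..b} t / (b - a)) \<longrightarrow> isCont U t"
      using Uc AE_lborel_singleton[of a] AE_lborel_singleton[of b]
      by eventually_elim (auto simp: indicator_def)
    hence "AE t in M. isCont U t"
      unfolding M_def uniform_measure_Icc_eq_density[OF ab] by (subst AE_density) auto
    thus ?thesis
      using sets_eq_imp_space_eq[of M borel]
      by (subst (asm) AE_iff_measurable[OF True]) (auto simp: M_def)
  qed (simp add: emeasure_notin_sets)
  have "(\<lambda>n. integral\<^sup>L (\<mu> n) U) \<longlonglongrightarrow> integral\<^sup>L M U"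
    by (rule weak_conv_imp_bdd_ae_continuous_conv[OF \<mu> M wc disc _ Um, of B]) (use Ub in simp)
  moreover have "eventually (\<lambda>n. integral\<^sup>L (\<mu> n) U = (\<Sum>i=1..m n. U (x n i)) / real (m n))
      sequentially"
    using pos by eventually_elim (simp add: \<mu>_def integral_grid_measure)
  ultimately show ?thesis
    unfolding M_def integral_uniform_Icc[OF ab Um Ub] by (rule Lim_transform_eventually)
qed

locale ae_continuous_on_Icc = bounded_on_Icc +
  assumes hc: "AE x in lebesgue. x \<in> {a..b} \<longrightarrow> continuous (at x within {a..b}) h"
begin

lemma envelopes_isCont_ae:
  "AE t in lborel. t \<in> {a<..<b} \<longrightarrow>
     isCont (upper_envelope a b h) t \<and> isCont (lower_envelope a b h) t"
proof -
  have "AE t in lborel. t \<in> {a..b} \<longrightarrow> continuous (at t within {a..b}) h"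
    using hc by (simp add: AE_completion_iff)
  thus ?thesis
    by eventually_elim (auto intro: isCont_upper_envelope isCont_lower_envelope)
qed

lemma envelopes_eq_ae:
  "\<exists>N. negligible N \<and>
     (\<forall>t\<in>{a..b} - N. upper_envelope a b h t = h t \<and> lower_envelope a b h t = h t)"
proof -
  from hc obtain N where
    N: "{t \<in> space lebesgue. \<not> (t \<in> {a..b} \<longrightarrow> continuous (at t within {a..b}) h)} \<subseteq> N"
      "N \<in> null_sets lebesgue"
    by (auto elim!: AE_E simp: null_setsI)
  hence "negligible N" by (simp add: negligible_iff_null_sets)
  moreover have "upper_envelope a b h t = h t \<and> lower_envelope a b h t = h t"
    if "t \<in> {a..b} - N" for t
    using N(1) that upper_envelope_eq lower_envelope_eq by auto
  ultimately show ?thesis by blast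
qed

lemma integrable_on_ae_continuous: "h integrable_on {a..b}"
  and integral_upper_envelope: "integral {a..b} (upper_envelope a b h) = integral {a..b} h"
  and integral_lower_envelope: "integral {a..b} (lower_envelope a b h) = integral {a..b} h"
proof -
  let ?U = "upper_envelope a b h" and ?L = "lower_envelope a b h"
  have U: "?U integrable_on {a..b}"
    by (rule integrable_on_Icc_bounded_borel(2)[OF borel_measurable_upper_envelope
          abs_upper_envelope_le])
  have L: "?L integrable_on {a..b}"
    by (rule integrable_on_Icc_bounded_borel(2)[OF borel_measurable_lower_envelope
          abs_lower_envelope_le])
  obtain N where N: "negligible N" "\<forall>t\<in>{a..b} - N. ?U t = h t \<and> ?L t = h t"
    using envelopes_eq_ae by blast
  have UL: "integral {a..b} ?U = integral {a..b} ?L"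
    using N by (intro integral_spike[of N]) auto
  have "\<forall>x\<in>{a..b}. ?L x \<le> h x \<and> h x \<le> ?U x"
    using lower_envelope_le upper_envelope_ge by blast
  with integrable_integral[OF L] integrable_integral[OF U] UL
  show h: "h integrable_on {a..b}"
    by (intro integrable_straddle exI[of _ ?L] exI[of _ ?U]
          exI[of _ "integral {a..b} ?L"] exI[of _ "integral {a..b} ?U"]) auto
  have "integral {a..b} h \<le> integral {a..b} ?U" "integral {a..b} ?L \<le> integral {a..b} h"
    using upper_envelope_ge lower_envelope_le by (auto intro!: integral_le U L h)
  thus "integral {a..b} ?U = integral {a..b} h" "integral {a..b} ?L = integral {a..b} h"
    using UL by linarith+
qed

theorem riemann_sums_tendsto:
  assumes grid: "asym_unif_grid a b m x" and xin: "\<And>n i. i \<in> {1..m n} \<Longrightarrow> x n i \<in> {a..b}"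
  shows "(\<lambda>n. (\<Sum>i=1..m n. h (x n i)) / real (m n)) \<longlonglongrightarrow> integral {a..b} h / (b - a)"
proof (rule tendsto_sandwich)
  have Uc: "AE t in lborel. t \<in> {a<..<b} \<longrightarrow> isCont (upper_envelope a b h) t"
    and Lc: "AE t in lborel. t \<in> {a<..<b} \<longrightarrow> isCont (lower_envelope a b h) t"
    using envelopes_isCont_ae by (auto elim: eventually_mono)
  show "(\<lambda>n. (\<Sum>i=1..m n. lower_envelope a b h (x n i)) / real (m n)) \<longlonglongrightarrow> integral {a..b} h / (b - a)"
    using riemann_sums_tendsto_borel[OF ab borel_measurable_lower_envelope
        abs_lower_envelope_le Lc grid]
    by (simp add: integral_lower_envelope)
  show "(\<lambda>n. (\<Sum>i=1..m n. upper_envelope a b h (x n i)) / real (m n)) \<longlonglongrightarrow> integral {a..b} h / (b - a)"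
    using riemann_sums_tendsto_borel[OF ab borel_measurable_upper_envelope
        abs_upper_envelope_le Uc grid]
    by (simp add: integral_upper_envelope)
  show "eventually (\<lambda>n. (\<Sum>i=1..m n. lower_envelope a b h (x n i)) / real (m n) \<le>
      (\<Sum>i=1..m n. h (x n i)) / real (m n)) sequentially"
    using lower_envelope_le xin by (intro always_eventually allI divide_right_mono sum_mono) auto
  show "eventually (\<lambda>n. (\<Sum>i=1..m n. h (x n i)) / real (m n) \<le>
      (\<Sum>i=1..m n. upper_envelope a b h (x n i)) / real (m n)) sequentially"
    using upper_envelope_ge xin by (intro always_eventually allI divide_right_mono sum_mono) auto
qed

end

context
  fixes a b B :: real and h :: "real \<Rightarrow> complex"
  assumes ab: "a < b" and hb: "\<And>x. x \<in> {a..b} \<Longrightarrow> norm (h x) \<le> B"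
    and hc: "AE x in lebesgue. x \<in> {a..b} \<longrightarrow> continuous (at x within {a..b}) h"
begin

lemma ae_continuous_on_Icc_Re: "ae_continuous_on_Icc a b B (\<lambda>x. Re (h x))"
proof unfold_locales
  show "\<bar>Re (h x)\<bar> \<le> B" if "x \<in> {a..b}" for x
    using hb[OF that] abs_Re_le_cmod[of "h x"] by linarith
  show "AE x in lebesgue. x \<in> {a..b} \<longrightarrow> continuous (at x within {a..b}) (\<lambda>x. Re (h x))"
    using hc by eventually_elim (auto intro: continuous_Re)
qed (fact ab)

lemma ae_continuous_on_Icc_Im: "ae_continuous_on_Icc a b B (\<lambda>x. Im (h x))"
proof unfold_locales
  show "\<bar>Im (h x)\<bar> \<le> B" if "x \<in> {a..b}" for x
    using hb[OF that] abs_Im_le_cmod[of "h x"] by linarith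
  show "AE x in lebesgue. x \<in> {a..b} \<longrightarrow> continuous (at x within {a..b}) (\<lambda>x. Im (h x))"
    using hc by eventually_elim (auto intro: continuous_Im)
qed (fact ab)

lemma has_integral_ae_continuous_complex:
  "(h has_integral
     Complex (integral {a..b} (\<lambda>x. Re (h x))) (integral {a..b} (\<lambda>x. Im (h x)))) {a..b}"
  using ae_continuous_on_Icc.integrable_on_ae_continuous[OF ae_continuous_on_Icc_Re]
    ae_continuous_on_Icc.integrable_on_ae_continuous[OF ae_continuous_on_Icc_Im]
  by (subst has_integral_componentwise_iff) (auto simp: Basis_complex_def)

lemma integrable_on_ae_continuous_complex: "h integrable_on {a..b}"
  using has_integral_ae_continuous_complex by blast

theorem riemann_sums_tendsto_complex:
  assumes grid: "asym_unif_grid a b m x" and xin: "\<And>n i. i \<in> {1..m n} \<Longrightarrow> x n i \<in> {a..b}"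
  shows "(\<lambda>n. (\<Sum>i=1..m n. h (x n i)) / of_nat (m n)) \<longlonglongrightarrow> integral {a..b} h / of_real (b - a)"
  unfolding tendsto_complex_iff integral_unique[OF has_integral_ae_continuous_complex]
  using ae_continuous_on_Icc.riemann_sums_tendsto[OF ae_continuous_on_Icc_Re grid xin]
    ae_continuous_on_Icc.riemann_sums_tendsto[OF ae_continuous_on_Icc_Im grid xin]
  by (simp add: Re_divide_of_real Im_divide_of_real Re_sum Im_sum)

end

lemma test_function_comp_ae_continuous:
  fixes g :: "real \<Rightarrow> real"
  assumes gc: "AE t in lebesgue. t \<in> {a..b} \<longrightarrow> continuous (at t within {a..b}) g"
    and F: "test_function F"
  shows "AE t in lebesgue. t \<in> {a..b} \<longrightarrow> continuous (at t within {a..b}) (\<lambda>t. F (of_real (g t)))"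
  using gc
  by eventually_elim
     (auto intro!: continuous_within_compose3[OF test_function_isCont[OF F]] continuous_of_real)

lemma integrable_on_test_function_comp:
  fixes g :: "real \<Rightarrow> real"
  assumes ab: "a < b" and gc: "AE t in lebesgue. t \<in> {a..b} \<longrightarrow> continuous (at t within {a..b}) g"
    and F: "test_function F"
  shows "(\<lambda>t. F (of_real (g t))) integrable_on {a..b}"
proof -
  obtain B where "\<And>z. norm (F z) \<le> B" using test_function_bounded[OF F] by blast
  with test_function_comp_ae_continuous[OF gc F] show ?thesis
    by (intro integrable_on_ae_continuous_complex[OF ab]) auto
qed

theorem distr_converges_grid:
  fixes g :: "real \<Rightarrow> real" and x :: "nat \<Rightarrow> nat \<Rightarrow> real"
  assumes ab: "a < b" and gc: "AE t in lebesgue. t \<in> {a..b} \<longrightarrow> continuous (at t within {a..b}) g"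
    and grid: "asym_unif_grid a b m x" and xin: "\<And>n i. i \<in> {1..m n} \<Longrightarrow> x n i \<in> {a..b}"
  shows "distr_converges (\<lambda>n. mset (map (\<lambda>i. g (x n i)) [1..<m n + 1])) (symbol_mean a b g)"
  unfolding distr_converges_def
proof (intro allI impI)
  fix F assume F: "test_function F"
  obtain B where "\<And>z. norm (F z) \<le> B" using test_function_bounded[OF F] by blast
  with test_function_comp_ae_continuous[OF gc F]
  have "(\<lambda>n. (\<Sum>i=1..m n. F (of_real (g (x n i)))) / of_nat (m n)) \<longlonglongrightarrow> symbol_mean a b g F"
    unfolding symbol_mean_def by (intro riemann_sums_tendsto_complex[OF ab _ _ grid xin]) auto
  moreover have "empirical_mean F (mset (map (\<lambda>i. g (x n i)) [1..<m n + 1])) =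
      (\<Sum>i=1..m n. F (of_real (g (x n i)))) / of_nat (m n)" for n
    unfolding empirical_mean_mset map_map interv_sum_list_conv_sum_set_nat
    by (simp add: o_def atLeastLessThanSuc_atLeastAtMost del: upt_Suc)
  ultimately show "(\<lambda>n. empirical_mean F (mset (map (\<lambda>i. g (x n i)) [1..<m n + 1])))
      \<longlonglongrightarrow> symbol_mean a b g F"
    by simp
qed

section \<open>Essential ranges and mixtures of symbols\<close>

lemma symbol_mean_Re_nonneg:
  fixes g :: "real \<Rightarrow> real"
  assumes ab: "a < b" and gc: "AE t in lebesgue. t \<in> {a..b} \<longrightarrow> continuous (at t within {a..b}) g"
    and G: "test_function G" and Gnn: "\<And>t. 0 \<le> Re (G (complex_of_real t))"
  shows "0 \<le> Re (symbol_mean a b g G)"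
proof -
  have "((\<lambda>t. Re (G (of_real (g t)))) has_integral Re (integral {a..b} (\<lambda>t. G (of_real (g t)))))
      {a..b}"
    using integrable_on_test_function_comp[OF ab gc G]
    by (rule has_integral_Re[OF integrable_integral])
  hence "0 \<le> Re (integral {a..b} (\<lambda>t. G (of_real (g t))))"
    by (rule has_integral_nonneg) (use Gnn in auto)
  thus ?thesis using ab by (simp add: symbol_mean_def Re_divide_of_real)
qed

lemma ess_range_neighbourhood:
  assumes z: "z \<in> ess_range a b g" and r: "0 < r"
  shows "{x \<in> {a..b}. \<bar>g x - z\<bar> < r} \<in> lmeasurable"
    and "0 < measure lebesgue {x \<in> {a..b}. \<bar>g x - z\<bar> < r}"
proof -
  define E where "E = {x \<in> {a..b}. \<bar>g x - z\<bar> < r}"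
  have pos: "0 < emeasure lebesgue E" using z r unfolding ess_range_def E_def by blast
  hence "E \<in> sets lebesgue" by (metis emeasure_notin_sets less_irrefl)
  hence E: "E \<in> lmeasurable"
    by (rule fmeasurableI2[OF lmeasurable_interval(1), rotated]) (auto simp: E_def)
  thus "{x \<in> {a..b}. \<bar>g x - z\<bar> < r} \<in> lmeasurable" by (simp add: E_def)
  show "0 < measure lebesgue {x \<in> {a..b}. \<bar>g x - z\<bar> < r}"
    using pos emeasure_eq_measure2[OF E] by (simp add: E_def ennreal_less_zero_iff)
qed

text \<open>If \<open>G \<ge> 1\<close> at a point \<open>z\<close> of the essential range, then \<open>G > 1/2\<close> on a neighbourhood of \<open>z\<close>,
  which \<open>g\<close> visits on a set of positive measure.\<close>
lemma symbol_mean_Re_pos: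
  fixes g :: "real \<Rightarrow> real"
  assumes ab: "a < b" and gc: "AE t in lebesgue. t \<in> {a..b} \<longrightarrow> continuous (at t within {a..b}) g"
    and z: "z \<in> ess_range a b g"
    and G: "test_function G" and Gnn: "\<And>t. 0 \<le> Re (G (complex_of_real t))"
    and Gz: "1 \<le> Re (G (complex_of_real z))"
  shows "0 < Re (symbol_mean a b g G)"
proof -
  obtain r where r: "0 < r"
    "\<And>w. dist w (complex_of_real z) < r \<Longrightarrow> dist (G w) (G (complex_of_real z)) < 1/2"
    using test_function_isCont[OF G] unfolding continuous_at_eps_delta
    by (metis half_gt_zero zero_less_one)
  have half: "1/2 < Re (G (complex_of_real t))" if "\<bar>t - z\<bar> < r" for t
  proof -
    have "cmod (G (complex_of_real t) - G (complex_of_real z)) < 1/2"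
      using r(2)[of "complex_of_real t"] that by (simp add: dist_norm flip: of_real_diff)
    thus ?thesis using abs_Re_le_cmod[of "G (complex_of_real t) - G (complex_of_real z)"] Gz by simp
  qed
  define E where "E = {x \<in> {a..b}. \<bar>g x - z\<bar> < r}"
  have E: "E \<in> lmeasurable" "0 < measure lebesgue E"
    unfolding E_def using ess_range_neighbourhood[OF z r(1)] by auto
  have "((\<lambda>t. (1/2) * indicat_real E t) has_integral (1/2) * measure lebesgue E) {a..b}"
  proof -
    have "(indicat_real E has_integral measure lebesgue E) UNIV"
      using E(1) by (simp add: lmeasurable_iff_has_integral[symmetric])
    moreover have "(\<lambda>x. if x \<in> {a..b} then indicat_real E x else 0) = indicat_real E"
      by (auto simp: indicator_def E_def)
    ultimately have "(indicat_real E has_integral measure lebesgue E) {a..b}"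
      by (metis has_integral_restrict_UNIV)
    thus ?thesis by (rule has_integral_mult_right)
  qed
  moreover have "((\<lambda>t. Re (G (of_real (g t)))) has_integral
      Re (integral {a..b} (\<lambda>t. G (of_real (g t))))) {a..b}"
    using integrable_on_test_function_comp[OF ab gc G]
    by (rule has_integral_Re[OF integrable_integral])
  moreover have "(1/2) * indicat_real E t \<le> Re (G (of_real (g t)))" for t
    using half[of "g t"] Gnn[of "g t"] by (cases "t \<in> E") (auto simp: E_def)
  ultimately have "(1/2) * measure lebesgue E \<le> Re (integral {a..b} (\<lambda>t. G (of_real (g t))))"
    by (rule has_integral_le)
  thus ?thesis using E(2) ab by (simp add: symbol_mean_def Re_divide_of_real)
qed

lemma charges_mixture_mean:
  assumes ab: "a < b" and J: "finite J" and j: "j \<in> J"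
    and cont: "\<And>j. j \<in> J \<Longrightarrow> AE x in lebesgue. x \<in> {a..b} \<longrightarrow> continuous (at x within {a..b}) (f j)"
    and z: "z \<in> {u..v}" "z \<in> ess_range a b (f j)"
  shows "charges (mixture_mean a b J f) u v"
  unfolding charges_def
proof (intro allI impI, elim conjE)
  fix G assume G: "test_function G" and Gnn: "\<forall>t. 0 \<le> Re (G (complex_of_real t))"
    and G1: "\<forall>t\<in>{u..v}. 1 \<le> Re (G (complex_of_real t))"
  have "0 < (\<Sum>i\<in>J. Re (symbol_mean a b (f i) G))"
  proof (rule sum_pos2[OF J j])
    show "0 < Re (symbol_mean a b (f j) G)"
      using z G1 Gnn by (intro symbol_mean_Re_pos[OF ab cont[OF j] _ G]) auto
    show "0 \<le> Re (symbol_mean a b (f i) G)" if "i \<in> J" for i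
      using Gnn by (intro symbol_mean_Re_nonneg[OF ab cont[OF that] G]) auto
  qed
  moreover have "0 < card J" using J j by (auto simp: card_gt_0_iff)
  ultimately show "0 < Re (mixture_mean a b J f G)"
    by (simp add: mixture_mean_def Re_sum Re_divide_of_nat)
qed

lemma size_filter_le_midpoint:
  fixes \<alpha> \<beta> \<delta> u v :: real
  assumes M: "set_mset M \<subseteq> {\<alpha> - \<delta> .. \<beta> + \<delta>}" and \<delta>: "\<delta> < (v - u) / 2"
    and out: "\<beta> < u \<or> v < \<alpha>"
  shows "size (filter_mset (\<lambda>t. t \<le> (u + v) / 2) M) = (if \<beta> < u then size M else 0)"
proof (cases "\<beta> < u")
  case True
  hence "filter_mset (\<lambda>t. t \<le> (u + v) / 2) M = M"
    using M \<delta> by (auto simp: filter_mset_eq_conv)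
  thus ?thesis using True by simp
next
  case False
  hence "filter_mset (\<lambda>t. t \<le> (u + v) / 2) M = {#}"
    using M \<delta> out by (auto simp: filter_mset_eq_conv)
  thus ?thesis using False by simp
qed

lemma eventually_counts_agree_at_midpoint:
  fixes X Y :: "nat \<Rightarrow> nat \<Rightarrow> real multiset" and \<alpha> \<beta> :: "nat \<Rightarrow> real"
  assumes J: "finite J" and uv: "u < v" and out: "\<And>j. j \<in> J \<Longrightarrow> \<beta> j < u \<or> v < \<alpha> j"
    and size: "\<And>n j. j \<in> J \<Longrightarrow> size (X n j) = size (Y n j)" and \<delta>: "\<delta> \<longlonglongrightarrow> 0"
    and range: "\<And>n j. j \<in> J \<Longrightarrow> set_mset (X n j + Y n j) \<subseteq> {\<alpha> j - \<delta> n .. \<beta> j + \<delta> n}"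
  shows "eventually (\<lambda>n. size (filter_mset (\<lambda>t. t \<le> (u + v) / 2) (\<Sum>j\<in>J. X n j)) =
                         size (filter_mset (\<lambda>t. t \<le> (u + v) / 2) (\<Sum>j\<in>J. Y n j))) sequentially"
proof -
  have "eventually (\<lambda>n. \<delta> n < (v - u) / 2) sequentially"
    using uv by (intro order_tendstoD(2)[OF \<delta>]) simp
  thus ?thesis
  proof (rule eventually_mono)
    fix n assume \<delta>n: "\<delta> n < (v - u) / 2"
    have count: "size (filter_mset (\<lambda>t. t \<le> (u + v) / 2) (Z n j)) =
        (if \<beta> j < u then size (Z n j) else 0)"
      if "j \<in> J" "Z = X \<or> Z = Y" for j Z
      using range[OF that(1), of n] that(2) \<delta>n out[OF that(1)]
      by (intro size_filter_le_midpoint) auto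
    have "size (filter_mset (\<lambda>t. t \<le> (u + v) / 2) (\<Sum>j\<in>J. Z n j)) =
        (\<Sum>j\<in>J. size (filter_mset (\<lambda>t. t \<le> (u + v) / 2) (Z n j)))" for Z
      using J by (induction J rule: finite_induct) auto
    thus "size (filter_mset (\<lambda>t. t \<le> (u + v) / 2) (\<Sum>j\<in>J. X n j)) =
        size (filter_mset (\<lambda>t. t \<le> (u + v) / 2) (\<Sum>j\<in>J. Y n j))"
      using count size by (auto intro!: sum.cong)
  qed
qed

lemma Inf_Sup_image_bounds:
  fixes g :: "real \<Rightarrow> real"
  assumes "bounded (g ` {a..b})" "t \<in> {a..b}"
  shows "Inf (g ` {a..b}) \<le> g t" "g t \<le> Sup (g ` {a..b})"
  using assms by (auto intro!: cInf_lower cSup_upper bounded_imp_bdd_below bounded_imp_bdd_above)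

context
  fixes a b :: real and J :: "nat set" and f :: "nat \<Rightarrow> real \<Rightarrow> real"
  assumes ab: "a < b" and J: "finite J"
    and bdd: "\<And>j. j \<in> J \<Longrightarrow> bounded (f j ` {a..b})"
    and cont: "\<And>j. j \<in> J \<Longrightarrow> AE x in lebesgue. x \<in> {a..b} \<longrightarrow> continuous (at x within {a..b}) (f j)"
    and ER: "\<And>j. j \<in> J \<Longrightarrow> ess_range a b (f j) = {Inf (f j ` {a..b}) .. Sup (f j ` {a..b})}"
begin

lemma counts_agree_off_support_mixture:
  fixes X Y :: "nat \<Rightarrow> nat \<Rightarrow> real multiset"
  assumes size: "\<And>n j. j \<in> J \<Longrightarrow> size (X n j) = size (Y n j)" and \<delta>: "\<delta> \<longlonglongrightarrow> 0"
    and range: "\<And>n j. j \<in> J \<Longrightarrow>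
      set_mset (X n j + Y n j) \<subseteq> {Inf (f j ` {a..b}) - \<delta> n .. Sup (f j ` {a..b}) + \<delta> n}"
  shows "counts_agree_off_support (mixture_mean a b J f) (\<lambda>n. \<Sum>j\<in>J. X n j) (\<lambda>n. \<Sum>j\<in>J. Y n j)"
  unfolding counts_agree_off_support_def
proof (intro allI impI)
  fix u v :: real assume uv: "u < v"
  define \<alpha> where "\<alpha> j = Inf (f j ` {a..b})" for j
  define \<beta> where "\<beta> j = Sup (f j ` {a..b})" for j
  show "charges (mixture_mean a b J f) u v \<or> (\<exists>c\<in>{u..v}.
      eventually (\<lambda>n. size (filter_mset (\<lambda>t. t \<le> c) (\<Sum>j\<in>J. X n j)) =
                      size (filter_mset (\<lambda>t. t \<le> c) (\<Sum>j\<in>J. Y n j))) sequentially)"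
  proof (cases "\<exists>j\<in>J. \<exists>z\<in>{u..v}. z \<in> {\<alpha> j..\<beta> j}")
    case True
    then obtain j z where j: "j \<in> J" and z: "z \<in> {u..v}" "z \<in> {\<alpha> j..\<beta> j}" by blast
    have "charges (mixture_mean a b J f) u v"
      using z ER[OF j] by (intro charges_mixture_mean[OF ab J j cont]) (auto simp: \<alpha>_def \<beta>_def)
    thus ?thesis ..
  next
    case False
    have out: "\<beta> j < u \<or> v < \<alpha> j" if "j \<in> J" for j
    proof (rule ccontr)
      assume "\<not> (\<beta> j < u \<or> v < \<alpha> j)"
      moreover have "a \<in> {a..b}" using ab by simp
      from Inf_Sup_image_bounds[OF bdd[OF that] this] have "\<alpha> j \<le> \<beta> j"
        unfolding \<alpha>_def \<beta>_def by linarith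
      ultimately have "max u (\<alpha> j) \<in> {u..v}" "max u (\<alpha> j) \<in> {\<alpha> j..\<beta> j}" using uv by auto
      thus False using False that by blast
    qed
    have "eventually (\<lambda>n. size (filter_mset (\<lambda>t. t \<le> (u + v) / 2) (\<Sum>j\<in>J. X n j)) =
        size (filter_mset (\<lambda>t. t \<le> (u + v) / 2) (\<Sum>j\<in>J. Y n j))) sequentially"
      by (rule eventually_counts_agree_at_midpoint[OF J uv out size \<delta> range[folded \<alpha>_def \<beta>_def]])
    moreover have "(u + v) / 2 \<in> {u..v}" using uv by simp
    ultimately show ?thesis by blast
  qed
qed

theorem sorted_lists_close_of_mixture:
  fixes xs ys :: "nat \<Rightarrow> real list" and X Y :: "nat \<Rightarrow> nat \<Rightarrow> real multiset"
  assumes sx: "\<And>n. sorted (xs n)" and sy: "\<And>n. sorted (ys n)"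
    and xs: "\<And>n. mset (xs n) = (\<Sum>j\<in>J. X n j)" and ys: "\<And>n. mset (ys n) = (\<Sum>j\<in>J. Y n j)"
    and size: "\<And>n j. j \<in> J \<Longrightarrow> size (X n j) = size (Y n j)" and \<delta>: "\<delta> \<longlonglongrightarrow> 0"
    and range: "\<And>n j. j \<in> J \<Longrightarrow>
      set_mset (X n j + Y n j) \<subseteq> {Inf (f j ` {a..b}) - \<delta> n .. Sup (f j ` {a..b}) + \<delta> n}"
    and cx: "distr_converges (\<lambda>n. mset (xs n)) (mixture_mean a b J f)"
    and cy: "distr_converges (\<lambda>n. mset (ys n)) (mixture_mean a b J f)"
    and e: "0 < e"
  shows "eventually (\<lambda>n. \<forall>i<length (xs n). \<bar>xs n ! i - ys n ! i\<bar> < e) sequentially"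
proof (rule sorted_lists_eventually_close[OF _ sx sy cx cy])
  show "length (xs n) = length (ys n)" for n
    using arg_cong[OF xs[of n], of size] arg_cong[OF ys[of n], of size] size
    by (simp add: size_multiset_sum)
  show "counts_agree_off_support (mixture_mean a b J f) (\<lambda>n. mset (xs n)) (\<lambda>n. mset (ys n))"
    unfolding xs ys by (rule counts_agree_off_support_mixture[OF size \<delta> range])
  define R where "R = (\<Sum>j\<in>J. \<bar>Inf (f j ` {a..b})\<bar> + \<bar>Sup (f j ` {a..b})\<bar>)"
  have R: "\<bar>Inf (f j ` {a..b})\<bar> + \<bar>Sup (f j ` {a..b})\<bar> \<le> R" if "j \<in> J" for j
    unfolding R_def by (rule member_le_sum[OF that _ J]) simp
  show "eventually (\<lambda>n. set (xs n) \<union> set (ys n) \<subseteq> {- R - 1 .. R + 1}) sequentially"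
    using order_tendstoD(2)[OF \<delta> zero_less_one]
  proof (rule eventually_mono, intro subsetI)
    fix n t assume "\<delta> n < 1" and "t \<in> set (xs n) \<union> set (ys n)"
    then obtain j where "j \<in> J" "t \<in># X n j + Y n j"
      using arg_cong[OF xs[of n], of set_mset] arg_cong[OF ys[of n], of set_mset]
      by (auto simp: set_mset_sum[OF J])
    hence "t \<in> {Inf (f j ` {a..b}) - 1 .. Sup (f j ` {a..b}) + 1}"
      using range[of j n] \<open>\<delta> n < 1\<close> by fastforce
    thus "t \<in> {- R - 1 .. R + 1}" using R[OF \<open>j \<in> J\<close>] by (auto simp: abs_le_iff)
  qed
qed (fact e)

lemma integral_diag_eq_mixture_mean:
  assumes F: "test_function F" and J': "J = {1..k}"
  shows "integral {a..b} (\<lambda>x. (\<Sum>j=1..k. F (of_real (f j x))) / of_nat k) / of_real (b - a) =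
    mixture_mean a b J f F"
proof -
  have "integral {a..b} (\<lambda>x. (\<Sum>j=1..k. F (of_real (f j x))) / of_nat k) =
      (\<Sum>j=1..k. integral {a..b} (\<lambda>x. F (of_real (f j x)))) / of_nat k"
    using J' by (subst integral_divide, subst integral_sum)
      (auto intro: integrable_on_test_function_comp[OF ab cont F])
  thus ?thesis using J' by (simp add: mixture_mean_def symbol_mean_def sum_divide_distrib ac_simps)
qed

lemma has_distr_diag_imp_distr_converges:
  assumes L: "has_distr_diag a b k f L" and J': "J = {1..k}"
  shows "distr_converges L (mixture_mean a b J f)"
  unfolding distr_converges_def
proof (intro allI impI)
  fix F assume F: "test_function F"
  with L have "(\<lambda>n. empirical_mean F (L n)) \<longlonglongrightarrow>
      integral {a..b} (\<lambda>x. (\<Sum>j=1..k. F (of_real (f j x))) / of_nat k) / of_real (b - a)"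
    unfolding has_distr_diag_def test_function_def empirical_mean_def by blast
  thus "(\<lambda>n. empirical_mean F (L n)) \<longlonglongrightarrow> mixture_mean a b J f F"
    by (simp only: integral_diag_eq_mixture_mean[OF F J'])
qed

end

lemma distr_converges_sum:
  fixes X :: "nat \<Rightarrow> nat \<Rightarrow> real multiset"
  assumes J: "finite J" and conv: "\<And>j. j \<in> J \<Longrightarrow> distr_converges (\<lambda>n. X n j) (\<Phi> j)"
    and ratio: "\<And>j. j \<in> J \<Longrightarrow>
      (\<lambda>n. real (size (X n j)) / real (size (\<Sum>j\<in>J. X n j))) \<longlonglongrightarrow> 1 / real (card J)"
  shows "distr_converges (\<lambda>n. \<Sum>j\<in>J. X n j) (\<lambda>F. (\<Sum>j\<in>J. \<Phi> j F) / of_nat (card J))"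
  unfolding distr_converges_def empirical_mean_sum[OF J]
proof (intro allI impI)
  fix F assume "test_function F"
  hence "(\<lambda>n. \<Sum>j\<in>J. complex_of_real (real (size (X n j)) / real (size (\<Sum>j\<in>J. X n j))) *
      empirical_mean F (X n j)) \<longlonglongrightarrow> (\<Sum>j\<in>J. complex_of_real (1 / real (card J)) * \<Phi> j F)"
    using conv ratio unfolding distr_converges_def
    by (intro tendsto_sum tendsto_mult tendsto_of_real) auto
  moreover have "(\<Sum>j\<in>J. complex_of_real (1 / real (card J)) * \<Phi> j F) =
      (\<Sum>j\<in>J. \<Phi> j F) / of_nat (card J)"
    by (simp add: sum_divide_distrib)
  ultimately show "(\<lambda>n. \<Sum>j\<in>J. complex_of_real (real (size (X n j)) / real (size (\<Sum>j\<in>J. X n j))) *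
      empirical_mean F (X n j)) \<longlonglongrightarrow> (\<Sum>j\<in>J. \<Phi> j F) / of_nat (card J)"
    by (simp only:)
qed

lemma filterlim_at_top_of_ratio:
  fixes s d :: "nat \<Rightarrow> nat"
  assumes d: "filterlim d at_top sequentially"
    and r: "(\<lambda>n. real (s n) / real (d n)) \<longlonglongrightarrow> c" and c: "0 < c"
  shows "filterlim s at_top sequentially"
  unfolding filterlim_at_top
proof
  fix Z :: nat
  have "eventually (\<lambda>n. c / 2 < real (s n) / real (d n)) sequentially"
    using r c by (intro order_tendstoD(1)) auto
  moreover have "eventually (\<lambda>n. nat \<lceil>2 * real Z / c\<rceil> + 1 \<le> d n) sequentially"
    using d by (simp add: filterlim_at_top)
  ultimately show "eventually (\<lambda>n. Z \<le> s n) sequentially"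
  proof eventually_elim
    case (elim n)
    have "2 * real Z / c \<le> real (d n)" using elim(2) by linarith
    hence "real Z \<le> c / 2 * real (d n)" using c by (simp add: field_simps)
    also have "\<dots> \<le> real (s n)" using elim by (simp add: field_simps)
    finally show ?case by simp
  qed
qed

section \<open>Sorted matching with grid samples of one symbol\<close>

lemma mset_map_permutes:
  assumes "\<sigma> permutes {1..m}"
  shows "mset (map (\<lambda>i. g (\<sigma> i)) [1..<m + 1]) = mset (map g [1..<m + 1])"
proof -
  have set: "{1..<m + 1} = {1..m}" by auto
  have "mset (map (\<lambda>i. g (\<sigma> i)) [1..<m + 1]) = image_mset g (image_mset \<sigma> (mset_set {1..<m + 1}))"
    by (simp only: mset_map mset_upt image_mset.compositionality o_def)
  also have "image_mset \<sigma> (mset_set {1..<m + 1}) = mset_set {1..<m + 1}"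
    unfolding set using image_mset_mset_set[OF permutes_inj_on[OF assms]] permutes_image[OF assms]
    by simp
  finally show ?thesis by (simp only: mset_map mset_upt)
qed

lemma exists_sorting_permutation:
  fixes g :: "nat \<Rightarrow> real"
  shows "\<exists>\<sigma>. \<sigma> permutes {1..m} \<and> sorted (map (\<lambda>i. g (\<sigma> i)) [1..<m + 1])"
proof -
  define ixs where "ixs = sort_key g [1..<m + 1]"
  have mset: "mset ixs = mset [1..<m + 1]" by (simp add: ixs_def)
  hence "distinct ixs" "length ixs = m" "set ixs = {1..m}"
    by (metis distinct_upt mset_eq_imp_distinct_iff,
        metis length_upt add_diff_cancel_left' size_mset add.commute,
        metis atLeastLessThanSuc_atLeastAtMost Suc_eq_plus1 set_mset_mset set_upt)
  hence nth: "bij_betw ((!) ixs) {..<m} {1..m}" using bij_betw_nth by fastforce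
  define \<sigma> where "\<sigma> i = (if i \<in> {1..m} then ixs ! (i - 1) else i)" for i
  have "bij_betw (\<lambda>i. i - 1) {1..m} {..<m}"
    by (rule bij_betw_byWitness[where f' = "\<lambda>i. i + 1"]) auto
  from bij_betw_trans[OF this nth] have "bij_betw \<sigma> {1..m} {1..m}"
    by (rule bij_betw_cong[THEN iffD1, rotated]) (simp add: \<sigma>_def)
  hence "\<sigma> permutes {1..m}" by (rule bij_imp_permutes) (auto simp: \<sigma>_def)
  moreover have "map (\<lambda>i. g (\<sigma> i)) [1..<m + 1] = map g ixs"
    using \<open>length ixs = m\<close> by (intro nth_equalityI) (auto simp: \<sigma>_def nth_upt simp del: upt_Suc)
  moreover have "sorted (map g ixs)" unfolding ixs_def by (rule sorted_sort_key)
  ultimately show ?thesis by auto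
qed

lemma nth_map_upt_1: "i \<in> {1..m} \<Longrightarrow> map h [1..<m + 1] ! (i - 1) = h i"
  by (auto simp: nth_upt simp del: upt_Suc)

lemma Min_permutes_le:
  fixes u v :: "nat \<Rightarrow> real"
  assumes \<sigma>: "\<sigma> permutes {1..m}" and \<tau>: "\<tau> permutes {1..m}"
  shows "Min ((\<lambda>\<rho>. Max ((\<lambda>i. \<bar>u i - v (\<rho> i)\<bar>) ` {1..m})) ` {\<rho>. \<rho> permutes {1..m}})
           \<le> Max ((\<lambda>i. \<bar>u (\<sigma> i) - v (\<tau> i)\<bar>) ` {1..m})"
proof -
  define \<rho> where "\<rho> = \<tau> \<circ> inv \<sigma>"
  have \<rho>: "\<rho> permutes {1..m}" unfolding \<rho>_def by (intro permutes_compose permutes_inv \<sigma> \<tau>)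
  have "(\<lambda>i. \<bar>u i - v (\<rho> i)\<bar>) ` {1..m} = (\<lambda>i. \<bar>u i - v (\<rho> i)\<bar>) ` (\<sigma> ` {1..m})"
    using permutes_image[OF \<sigma>] by simp
  also have "\<dots> = (\<lambda>i. \<bar>u (\<sigma> i) - v (\<tau> i)\<bar>) ` {1..m}"
    unfolding image_image \<rho>_def using permutes_inverses(2)[OF \<sigma>] by simp
  finally have "Max ((\<lambda>i. \<bar>u i - v (\<rho> i)\<bar>) ` {1..m}) = Max ((\<lambda>i. \<bar>u (\<sigma> i) - v (\<tau> i)\<bar>) ` {1..m})"
    by simp
  moreover have "finite {\<rho>. \<rho> permutes {1..m}}" by (simp add: finite_permutations)
  ultimately show ?thesis
    using \<rho> by (metis (mono_tags) Min_le finite_imageI image_eqI mem_Collect_eq)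
qed

lemma Min_permutes_nonneg:
  fixes u v :: "nat \<Rightarrow> real"
  assumes "0 < m"
  shows "0 \<le> Min ((\<lambda>\<rho>. Max ((\<lambda>i. \<bar>u i - v (\<rho> i)\<bar>) ` {1..m})) ` {\<rho>. \<rho> permutes {1..m}})"
proof -
  have "0 \<le> Max ((\<lambda>i. \<bar>u i - v (\<rho> i)\<bar>) ` {1..m})" for \<rho>
    using assms by (intro order_trans[OF _ Max_ge[of _ "\<bar>u 1 - v (\<rho> 1)\<bar>"]]) auto
  thus ?thesis
    by (subst Min_ge_iff) (auto simp: finite_permutations intro!: exI[of _ id] permutes_id)
qed

text \<open>Property (d) of the theorem for a single symbol \<open>g\<close> and a sequence of multisets \<open>P\<close>.\<close>
definition grid_matching :: "real \<Rightarrow> real \<Rightarrow> (real \<Rightarrow> real) \<Rightarrow> (nat \<Rightarrow> real multiset) \<Rightarrow> bool" where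
  "grid_matching a b g P \<longleftrightarrow> (\<forall>x :: nat \<Rightarrow> nat \<Rightarrow> real.
     asym_unif_grid a b (\<lambda>n. size (P n)) x \<and> (\<forall>n. \<forall>i\<in>{1..size (P n)}. x n i \<in> {a..b}) \<longrightarrow>
     (\<forall>lam :: nat \<Rightarrow> nat \<Rightarrow> real.
        (\<forall>n. mset (map (lam n) [1..<size (P n) + 1]) = P n) \<longrightarrow>
        ((\<forall>\<sigma> \<tau> :: nat \<Rightarrow> nat \<Rightarrow> nat.
            (\<forall>n. \<sigma> n permutes {1..size (P n)} \<and> \<tau> n permutes {1..size (P n)} \<and>
                 sorted (map (\<lambda>i. g (x n (\<sigma> n i))) [1..<size (P n) + 1]) \<and>
                 sorted (map (\<lambda>i. lam n (\<tau> n i)) [1..<size (P n) + 1])) \<longrightarrow>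
            (\<lambda>n. Max ((\<lambda>i. \<bar>g (x n (\<sigma> n i)) - lam n (\<tau> n i)\<bar>) ` {1..size (P n)})) \<longlonglongrightarrow> 0) \<and>
         (\<lambda>n. Min ((\<lambda>\<tau>. Max ((\<lambda>i. \<bar>g (x n i) - lam n (\<tau> i)\<bar>) ` {1..size (P n)}))
                     ` {\<tau>. \<tau> permutes {1..size (P n)}})) \<longlonglongrightarrow> 0)))"

lemma mixture_mean_singleton: "mixture_mean a b {j} f = symbol_mean a b (f j)"
  by (simp add: mixture_mean_def fun_eq_iff)

context
  fixes a b :: real and g :: "real \<Rightarrow> real" and P :: "nat \<Rightarrow> real multiset" and \<delta> :: "nat \<Rightarrow> real"
    and x :: "nat \<Rightarrow> nat \<Rightarrow> real" and lam :: "nat \<Rightarrow> nat \<Rightarrow> real"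
  assumes ab: "a < b" and bdd: "bounded (g ` {a..b})"
    and cont: "AE t in lebesgue. t \<in> {a..b} \<longrightarrow> continuous (at t within {a..b}) g"
    and ER: "ess_range a b g = {Inf (g ` {a..b}) .. Sup (g ` {a..b})}"
    and conv: "distr_converges P (symbol_mean a b g)"
    and \<delta>: "\<delta> \<longlonglongrightarrow> 0"
    and range: "\<And>n. set_mset (P n) \<subseteq> {Inf (g ` {a..b}) - \<delta> n .. Sup (g ` {a..b}) + \<delta> n}"
    and grid: "asym_unif_grid a b (\<lambda>n. size (P n)) x"
    and xin: "\<And>n i. i \<in> {1..size (P n)} \<Longrightarrow> x n i \<in> {a..b}"
    and lam: "\<And>n. mset (map (lam n) [1..<size (P n) + 1]) = P n"
begin

lemma sorted_grid_lists_close: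
  assumes \<sigma>: "\<And>n. \<sigma> n permutes {1..size (P n)}" and \<tau>: "\<And>n. \<tau> n permutes {1..size (P n)}"
    and s\<sigma>: "\<And>n. sorted (map (\<lambda>i. g (x n (\<sigma> n i))) [1..<size (P n) + 1])"
    and s\<tau>: "\<And>n. sorted (map (\<lambda>i. lam n (\<tau> n i)) [1..<size (P n) + 1])"
    and e: "0 < e"
  shows "eventually (\<lambda>n. \<forall>i<size (P n). \<bar>map (\<lambda>i. g (x n (\<sigma> n i))) [1..<size (P n) + 1] ! i -
      map (\<lambda>i. lam n (\<tau> n i)) [1..<size (P n) + 1] ! i\<bar> < e) sequentially"
proof -
  define A where "A n = map (\<lambda>i. g (x n (\<sigma> n i))) [1..<size (P n) + 1]" for n
  define B where "B n = map (\<lambda>i. lam n (\<tau> n i)) [1..<size (P n) + 1]" for n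
  have mA: "mset (A n) = mset (map (\<lambda>i. g (x n i)) [1..<size (P n) + 1])" for n
    unfolding A_def by (rule mset_map_permutes[OF \<sigma>])
  have mB: "mset (B n) = P n" for n
    unfolding B_def mset_map_permutes[OF \<tau>] by (rule lam)
  have range_A: "set (A n) \<subseteq> {Inf (g ` {a..b}) - \<bar>\<delta> n\<bar> .. Sup (g ` {a..b}) + \<bar>\<delta> n\<bar>}" for n
  proof
    fix t assume "t \<in> set (A n)"
    then obtain i where i: "i \<in> {1..size (P n)}" "t = g (x n (\<sigma> n i))"
      by (auto simp: A_def less_Suc_eq_le simp del: upt_Suc)
    hence "x n (\<sigma> n i) \<in> {a..b}" using xin permutes_in_image[OF \<sigma>] by blast
    hence "Inf (g ` {a..b}) \<le> t" "t \<le> Sup (g ` {a..b})"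
      using Inf_Sup_image_bounds[OF bdd] i(2) by auto
    thus "t \<in> {Inf (g ` {a..b}) - \<bar>\<delta> n\<bar> .. Sup (g ` {a..b}) + \<bar>\<delta> n\<bar>}"
      using abs_ge_zero[of "\<delta> n"] by auto
  qed
  have range_B: "set (B n) \<subseteq> {Inf (g ` {a..b}) - \<bar>\<delta> n\<bar> .. Sup (g ` {a..b}) + \<bar>\<delta> n\<bar>}" for n
  proof
    fix t assume "t \<in> set (B n)"
    hence "t \<in># P n" using mB[of n] by (metis set_mset_mset)
    hence "t \<in> {Inf (g ` {a..b}) - \<delta> n .. Sup (g ` {a..b}) + \<delta> n}" using range by blast
    thus "t \<in> {Inf (g ` {a..b}) - \<bar>\<delta> n\<bar> .. Sup (g ` {a..b}) + \<bar>\<delta> n\<bar>}" by (simp add: abs_if)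
  qed
  have conv_A: "distr_converges (\<lambda>n. mset (A n)) (mixture_mean a b {1} (\<lambda>_. g))"
    unfolding mA mixture_mean_singleton by (rule distr_converges_grid[OF ab cont grid xin])
  have conv_B: "distr_converges (\<lambda>n. mset (B n)) (mixture_mean a b {1} (\<lambda>_. g))"
    unfolding mB mixture_mean_singleton by (rule conv)
  have sorted: "sorted (A n)" "sorted (B n)" and len: "length (A n) = length (B n)" for n
    unfolding A_def B_def using s\<sigma> s\<tau> by simp_all
  have "eventually (\<lambda>n. \<forall>i<length (A n). \<bar>A n ! i - B n ! i\<bar> < e) sequentially"
    by (rule sorted_lists_close_of_mixture[where J = "{1}" and f = "\<lambda>_. g"
          and X = "\<lambda>n _. mset (A n)" and Y = "\<lambda>n _. mset (B n)" and \<delta> = "\<lambda>n. \<bar>\<delta> n\<bar>",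
          OF ab _ bdd cont ER sorted _ _ _ tendsto_rabs_zero[OF \<delta>] _ conv_A conv_B e])
       (simp_all add: len range_A range_B)
  thus ?thesis by (simp only: A_def B_def length_map length_upt add_diff_cancel_right')
qed

lemma sorted_grid_matching:
  assumes \<sigma>: "\<And>n. \<sigma> n permutes {1..size (P n)}" and \<tau>: "\<And>n. \<tau> n permutes {1..size (P n)}"
    and s\<sigma>: "\<And>n. sorted (map (\<lambda>i. g (x n (\<sigma> n i))) [1..<size (P n) + 1])"
    and s\<tau>: "\<And>n. sorted (map (\<lambda>i. lam n (\<tau> n i)) [1..<size (P n) + 1])"
  shows "(\<lambda>n. Max ((\<lambda>i. \<bar>g (x n (\<sigma> n i)) - lam n (\<tau> n i)\<bar>) ` {1..size (P n)})) \<longlonglongrightarrow> 0"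
proof (rule tendsto_Max_abs_zero)
  show "eventually (\<lambda>n. \<forall>i\<in>{1..size (P n)}. \<bar>g (x n (\<sigma> n i)) - lam n (\<tau> n i)\<bar> < e) sequentially"
    if "0 < e" for e
    using sorted_grid_lists_close[OF \<sigma> \<tau> s\<sigma> s\<tau> that]
  proof (rule eventually_mono, intro ballI)
    fix n i assume i: "i \<in> {1..size (P n)}"
      and close: "\<forall>i<size (P n). \<bar>map (\<lambda>i. g (x n (\<sigma> n i))) [1..<size (P n) + 1] ! i -
        map (\<lambda>i. lam n (\<tau> n i)) [1..<size (P n) + 1] ! i\<bar> < e"
    have "i - 1 < size (P n)" using i by auto
    from close[rule_format, OF this] show "\<bar>g (x n (\<sigma> n i)) - lam n (\<tau> n i)\<bar> < e"
      unfolding nth_map_upt_1[OF i] .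
  qed
  show "eventually (\<lambda>n. {1..size (P n)} \<noteq> {}) sequentially"
    using asym_unif_grid_eventually_pos[OF grid] by eventually_elim auto
qed simp

lemma min_perm_grid_matching:
  "(\<lambda>n. Min ((\<lambda>\<tau>. Max ((\<lambda>i. \<bar>g (x n i) - lam n (\<tau> i)\<bar>) ` {1..size (P n)}))
      ` {\<tau>. \<tau> permutes {1..size (P n)}})) \<longlonglongrightarrow> 0"
proof -
  have "\<forall>n. \<exists>\<sigma>. \<sigma> permutes {1..size (P n)} \<and> sorted (map (\<lambda>i. g (x n (\<sigma> i))) [1..<size (P n) + 1])"
    by (intro allI exists_sorting_permutation)
  then obtain \<sigma> where \<sigma>: "\<And>n. \<sigma> n permutes {1..size (P n)} \<and>
      sorted (map (\<lambda>i. g (x n (\<sigma> n i))) [1..<size (P n) + 1])"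
    by metis
  have "\<forall>n. \<exists>\<tau>. \<tau> permutes {1..size (P n)} \<and> sorted (map (\<lambda>i. lam n (\<tau> i)) [1..<size (P n) + 1])"
    by (intro allI exists_sorting_permutation)
  then obtain \<tau> where \<tau>: "\<And>n. \<tau> n permutes {1..size (P n)} \<and>
      sorted (map (\<lambda>i. lam n (\<tau> n i)) [1..<size (P n) + 1])"
    by metis
  show ?thesis
  proof (rule tendsto_sandwich[OF _ _ tendsto_const sorted_grid_matching])
    show "eventually (\<lambda>n. 0 \<le> Min ((\<lambda>\<tau>. Max ((\<lambda>i. \<bar>g (x n i) - lam n (\<tau> i)\<bar>) ` {1..size (P n)}))
        ` {\<tau>. \<tau> permutes {1..size (P n)}})) sequentially"
      using asym_unif_grid_eventually_pos[OF grid] by eventually_elim (rule Min_permutes_nonneg)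
    show "eventually (\<lambda>n. Min ((\<lambda>\<tau>. Max ((\<lambda>i. \<bar>g (x n i) - lam n (\<tau> i)\<bar>) ` {1..size (P n)}))
        ` {\<tau>. \<tau> permutes {1..size (P n)}}) \<le>
        Max ((\<lambda>i. \<bar>g (x n (\<sigma> n i)) - lam n (\<tau> n i)\<bar>) ` {1..size (P n)})) sequentially"
      using \<sigma> \<tau> by (intro always_eventually allI Min_permutes_le) auto
  qed (use \<sigma> \<tau> in auto)
qed

end

theorem grid_matching_if_localized:
  assumes "a < b" and "bounded (g ` {a..b})"
    and "AE t in lebesgue. t \<in> {a..b} \<longrightarrow> continuous (at t within {a..b}) g"
    and "ess_range a b g = {Inf (g ` {a..b}) .. Sup (g ` {a..b})}"
    and "distr_converges P (symbol_mean a b g)"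
    and "\<delta> \<longlonglongrightarrow> 0"
    and "\<And>n. set_mset (P n) \<subseteq> {Inf (g ` {a..b}) - \<delta> n .. Sup (g ` {a..b}) + \<delta> n}"
  shows "grid_matching a b g P"
  unfolding grid_matching_def
  by (intro allI impI conjI; elim conjE)
     (blast intro: sorted_grid_matching[OF assms] min_perm_grid_matching[OF assms])+

section \<open>Construction of the partition\<close>

text \<open>The \<open>i\<close>-th smallest eigenvalue is put into block \<open>j\<close> exactly when the \<open>i\<close>-th smallest
  tagged sample carries the tag \<open>j\<close>.\<close>
definition block_of :: "real list \<Rightarrow> (real \<times> nat) list \<Rightarrow> nat \<Rightarrow> real list" where
  "block_of ls ts j = map fst (filter (\<lambda>z. snd (snd z) = j) (zip ls ts))"

lemma map_snd_filter_zip: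
  "length ls = length ts \<Longrightarrow> map snd (filter (\<lambda>z. P (snd z)) (zip ls ts)) = filter P ts"
  by (induction ls ts rule: list_induct2) auto

lemma length_block_of:
  assumes "length ls = length ts"
  shows "length (block_of ls ts j) = length (filter (\<lambda>p. snd p = j) ts)"
  using arg_cong[OF map_snd_filter_zip[OF assms, of "\<lambda>p. snd p = j"], of length]
  by (simp add: block_of_def)

lemma sum_mset_filter_tags:
  assumes "finite J" "\<And>z. z \<in> set zs \<Longrightarrow> tag z \<in> J"
  shows "(\<Sum>j\<in>J. mset (map g (filter (\<lambda>z. tag z = j) zs))) = mset (map g zs)"
  using assms(2)
proof (induction zs)
  case (Cons z zs)
  have "(\<Sum>j\<in>J. mset (map g (filter (\<lambda>z. tag z = j) (z # zs)))) =
      (\<Sum>j\<in>J. (if tag z = j then {#g z#} else {#}) + mset (map g (filter (\<lambda>z. tag z = j) zs)))"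
    by (intro sum.cong) auto
  also have "\<dots> = (\<Sum>j\<in>J. (if tag z = j then {#g z#} else {#})) +
      (\<Sum>j\<in>J. mset (map g (filter (\<lambda>z. tag z = j) zs)))"
    by (rule sum.distrib)
  also have "(\<Sum>j\<in>J. (if tag z = j then {#g z#} else {#})) = {#g z#}"
    using Cons.prems assms(1) by (simp add: sum.delta)
  finally show ?case using Cons by simp
qed simp

lemma sum_mset_block_of:
  assumes "length ls = length ts" "finite J" "snd ` set ts \<subseteq> J"
  shows "(\<Sum>j\<in>J. mset (block_of ls ts j)) = mset ls"
proof -
  have "snd (snd z) \<in> J" if "z \<in> set (zip ls ts)" for z
    using set_zip_rightD[of "fst z" "snd z" ls ts] that assms(3) by auto
  hence "(\<Sum>j\<in>J. mset (block_of ls ts j)) = mset (map fst (zip ls ts))"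
    unfolding block_of_def by (rule sum_mset_filter_tags[OF assms(2)])
  thus ?thesis using assms(1) by simp
qed

context
  fixes ls :: "real list" and ts :: "(real \<times> nat) list" and \<delta> :: real
  assumes len: "length ls = length ts"
    and close: "\<And>i. i < length ls \<Longrightarrow> \<bar>ls ! i - fst (ts ! i)\<bar> \<le> \<delta>"
begin

lemma close_on_zip: "w \<in> set (zip ls ts) \<Longrightarrow> \<bar>fst w - fst (snd w)\<bar> \<le> \<delta>"
  using close by (auto simp: set_zip)

lemma block_of_close:
  assumes i: "i < length (block_of ls ts j)"
  shows "\<bar>block_of ls ts j ! i - map fst (filter (\<lambda>p. snd p = j) ts) ! i\<bar> \<le> \<delta>"
proof -
  define W where "W = filter (\<lambda>z. snd (snd z) = j) (zip ls ts)"
  have "map fst (filter (\<lambda>p. snd p = j) ts) = map fst (map snd W)"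
    unfolding W_def map_snd_filter_zip[OF len, of "\<lambda>p. snd p = j"] ..
  hence "map fst (filter (\<lambda>p. snd p = j) ts) = map (\<lambda>w. fst (snd w)) W" by simp
  moreover have "i < length W" "W ! i \<in> set (zip ls ts)"
    using i by (auto simp: block_of_def W_def dest: nth_mem)
  ultimately show ?thesis
    using close_on_zip by (simp add: block_of_def W_def[symmetric])
qed

lemma set_block_of:
  assumes "t \<in> set (block_of ls ts j)"
  shows "\<exists>p\<in>set ts. snd p = j \<and> \<bar>t - fst p\<bar> \<le> \<delta>"
proof -
  obtain w where w: "w \<in> set (zip ls ts)" "snd (snd w) = j" "t = fst w"
    using assms by (auto simp: block_of_def)
  moreover have "snd w \<in> set ts" using set_zip_rightD[of "fst w" "snd w" ls ts] w(1) by simp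
  ultimately show ?thesis using close_on_zip[OF w(1)] by blast
qed

end

lemma filter_mset_sum: "filter_mset P (\<Sum>j\<in>J. M j) = (\<Sum>j\<in>J. filter_mset P (M j))"
  by (induction J rule: infinite_finite_induct) auto

lemma image_mset_sum: "image_mset g (\<Sum>j\<in>J. M j) = (\<Sum>j\<in>J. image_mset g (M j))"
  by (induction J rule: infinite_finite_induct) auto

lemma filter_mset_tagged:
  "filter_mset (\<lambda>p. snd p = j) (mset (map (\<lambda>v. (v, i)) xs)) =
    (if i = j then mset (map (\<lambda>v. (v, i)) xs) else {#})"
  by (induction xs) auto

locale diag_spectrum =
  fixes a b :: real and k :: nat and f :: "nat \<Rightarrow> real \<Rightarrow> real"
    and Lam :: "nat \<Rightarrow> real multiset" and Lt :: "nat \<Rightarrow> nat \<Rightarrow> real multiset" and \<epsilon> :: "nat \<Rightarrow> real"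
  assumes ab: "a < b" and k: "1 \<le> k"
    and bdd: "\<And>j. j \<in> {1..k} \<Longrightarrow> bounded (f j ` {a..b})"
    and cont: "\<And>j. j \<in> {1..k} \<Longrightarrow>
      AE x in lebesgue. x \<in> {a..b} \<longrightarrow> continuous (at x within {a..b}) (f j)"
    and ER: "\<And>j. j \<in> {1..k} \<Longrightarrow> ess_range a b (f j) = {Inf (f j ` {a..b}) .. Sup (f j ` {a..b})}"
    and distr: "has_distr_diag a b k f Lam"
    and part: "\<And>n. (\<Sum>j\<in>{1..k}. Lt n j) = Lam n"
    and ratio: "\<And>j. j \<in> {1..k} \<Longrightarrow> (\<lambda>n. real (size (Lt n j)) / real (size (Lam n))) \<longlonglongrightarrow> 1 / real k"
    and \<epsilon>: "\<epsilon> \<longlonglongrightarrow> 0"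
    and localized: "\<And>n j. j \<in> {1..k} \<Longrightarrow>
      set_mset (Lt n j) \<subseteq> {Inf (f j ` {a..b}) - \<epsilon> n .. Sup (f j ` {a..b}) + \<epsilon> n}"
begin

definition samples :: "nat \<Rightarrow> nat \<Rightarrow> real list" where
  "samples n j =
     map (\<lambda>i. f j (a + real i * (b - a) / real (size (Lt n j)))) [1..<size (Lt n j) + 1]"

definition tagged_samples :: "nat \<Rightarrow> (real \<times> nat) list" where
  "tagged_samples n = sort_key fst (concat (map (\<lambda>j. map (\<lambda>v. (v, j)) (samples n j)) [1..<k + 1]))"

definition sorted_spectrum :: "nat \<Rightarrow> real list" where
  "sorted_spectrum n = sorted_list_of_multiset (Lam n)"

definition block :: "nat \<Rightarrow> nat \<Rightarrow> real multiset" where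
  "block n j = mset (block_of (sorted_spectrum n) (tagged_samples n) j)"

definition matching_error :: "nat \<Rightarrow> real" where
  "matching_error n =
     Max ((\<lambda>i. \<bar>sorted_spectrum n ! i - fst (tagged_samples n ! i)\<bar>) ` {..<size (Lam n)})"

lemma size_Lam: "size (Lam n) = (\<Sum>j\<in>{1..k}. size (Lt n j))"
  by (simp add: part[symmetric] size_multiset_sum)

lemma filterlim_size_Lam: "filterlim (\<lambda>n. size (Lam n)) at_top sequentially"
  using distr by (simp add: has_distr_diag_def)

lemma filterlim_size_Lt: "j \<in> {1..k} \<Longrightarrow> filterlim (\<lambda>n. size (Lt n j)) at_top sequentially"
  using k by (intro filterlim_at_top_of_ratio[OF filterlim_size_Lam ratio]) auto

lemma samples_in_range:
  assumes j: "j \<in> {1..k}" and t: "t \<in> set (samples n j)"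
  shows "t \<in> {Inf (f j ` {a..b}) .. Sup (f j ` {a..b})}"
proof -
  obtain i where "i \<in> {1..size (Lt n j)}" "t = f j (a + real i * (b - a) / real (size (Lt n j)))"
    using t by (auto simp: samples_def less_Suc_eq_le simp del: upt_Suc)
  thus ?thesis using Inf_Sup_image_bounds[OF bdd[OF j]] uniform_grid_in_Icc[of a b] ab by auto
qed

lemma length_samples: "length (samples n j) = size (Lt n j)"
  by (simp add: samples_def del: upt_Suc)

lemma mset_tagged_samples:
  "mset (tagged_samples n) = (\<Sum>j\<in>{1..k}. mset (map (\<lambda>v. (v, j)) (samples n j)))"
  by (simp add: tagged_samples_def mset_concat interv_sum_list_conv_sum_set_nat
      atLeastLessThanSuc_atLeastAtMost o_def del: upt_Suc)

lemma length_tagged_samples: "length (tagged_samples n) = size (Lam n)"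
  using arg_cong[OF mset_tagged_samples[of n], of size]
  by (simp add: size_multiset_sum size_Lam length_samples)

lemma length_sorted_spectrum: "length (sorted_spectrum n) = size (Lam n)"
  by (metis sorted_spectrum_def mset_sorted_list_of_multiset size_mset)

lemma tagged_samples_tags: "p \<in> set (tagged_samples n) \<Longrightarrow> snd p \<in> {1..k}"
  using arg_cong[OF mset_tagged_samples[of n], of set_mset] by (auto simp: set_mset_sum)

lemma tagged_samples_in_range:
  "p \<in> set (tagged_samples n) \<Longrightarrow> fst p \<in> {Inf (f (snd p) ` {a..b}) .. Sup (f (snd p) ` {a..b})}"
  using arg_cong[OF mset_tagged_samples[of n], of set_mset] samples_in_range
  by (auto simp: set_mset_sum)

lemma mset_filter_tagged_samples:
  assumes j: "j \<in> {1..k}"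
  shows "mset (filter (\<lambda>p. snd p = j) (tagged_samples n)) = mset (map (\<lambda>v. (v, j)) (samples n j))"
proof -
  have "mset (filter (\<lambda>p. snd p = j) (tagged_samples n)) =
      (\<Sum>i\<in>{1..k}. if i = j then mset (map (\<lambda>v. (v, i)) (samples n i)) else {#})"
    unfolding mset_filter mset_tagged_samples filter_mset_sum filter_mset_tagged ..
  also have "\<dots> = mset (map (\<lambda>v. (v, j)) (samples n j))"
    using j by (subst sum.delta) auto
  finally show ?thesis .
qed

lemma samples_of_tag:
  assumes j: "j \<in> {1..k}"
  shows "mset (map fst (filter (\<lambda>p. snd p = j) (tagged_samples n))) = mset (samples n j)"
  using arg_cong[OF mset_filter_tagged_samples[OF j, of n], of "image_mset fst"]
  by (simp add: multiset.map_comp o_def)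

lemma mset_map_fst_tagged_samples:
  "mset (map fst (tagged_samples n)) = (\<Sum>j\<in>{1..k}. mset (samples n j))"
  using arg_cong[OF mset_tagged_samples[of n], of "image_mset fst"]
  by (simp add: image_mset_sum multiset.map_comp o_def)

lemma distr_converges_samples:
  assumes j: "j \<in> {1..k}"
  shows "distr_converges (\<lambda>n. mset (samples n j)) (symbol_mean a b (f j))"
  unfolding samples_def
  using ab uniform_grid_in_Icc asym_unif_grid_uniform[OF filterlim_size_Lt[OF j]]
  by (intro distr_converges_grid[OF ab cont[OF j]]) auto

lemma distr_converges_sorted_spectrum:
  "distr_converges (\<lambda>n. mset (sorted_spectrum n)) (mixture_mean a b {1..k} f)"
  unfolding sorted_spectrum_def mset_sorted_list_of_multiset
  by (rule has_distr_diag_imp_distr_converges[OF ab _ bdd cont ER distr]) auto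

lemma distr_converges_tagged_samples:
  "distr_converges (\<lambda>n. mset (map fst (tagged_samples n))) (mixture_mean a b {1..k} f)"
proof -
  have "distr_converges (\<lambda>n. \<Sum>j\<in>{1..k}. mset (samples n j))
      (\<lambda>F. (\<Sum>j\<in>{1..k}. symbol_mean a b (f j) F) / of_nat (card {1..k}))"
    using ratio distr_converges_samples
    by (intro distr_converges_sum) (auto simp: size_multiset_sum length_samples size_Lam)
  thus ?thesis unfolding mset_map_fst_tagged_samples by (simp add: mixture_mean_def[abs_def])
qed

lemma matching_error_ge:
  "i < size (Lam n) \<Longrightarrow> \<bar>sorted_spectrum n ! i - fst (tagged_samples n ! i)\<bar> \<le> matching_error n"
  unfolding matching_error_def by (rule Max_ge) auto

lemma matching_error_tendsto: "matching_error \<longlonglongrightarrow> 0"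
  unfolding matching_error_def
proof (rule tendsto_Max_abs_zero)
  have "eventually (\<lambda>n. 1 \<le> size (Lam n)) sequentially"
    using filterlim_size_Lam by (simp add: filterlim_at_top)
  thus "eventually (\<lambda>n. {..<size (Lam n)} \<noteq> {}) sequentially"
    by eventually_elim (metis emptyE lessThan_iff less_le_trans zero_less_one)
  fix e :: real assume e: "0 < e"
  have range: "set_mset (Lt n j + mset (samples n j)) \<subseteq>
      {Inf (f j ` {a..b}) - \<bar>\<epsilon> n\<bar> .. Sup (f j ` {a..b}) + \<bar>\<epsilon> n\<bar>}" if "j \<in> {1..k}" for n j
    using localized[OF that, of n] samples_in_range[OF that, of _ n] abs_ge_zero[of "\<epsilon> n"]
    by (fastforce simp: abs_if)
  have spectrum: "mset (sorted_spectrum n) = (\<Sum>j\<in>{1..k}. Lt n j)" for n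
    unfolding sorted_spectrum_def part by simp
  have "eventually (\<lambda>n. \<forall>i<length (sorted_spectrum n).
      \<bar>sorted_spectrum n ! i - map fst (tagged_samples n) ! i\<bar> < e) sequentially"
    by (rule sorted_lists_close_of_mixture[where J = "{1..k}" and X = Lt
          and Y = "\<lambda>n j. mset (samples n j)" and \<delta> = "\<lambda>n. \<bar>\<epsilon> n\<bar>",
          OF ab _ bdd cont ER _ _ spectrum mset_map_fst_tagged_samples _
             tendsto_rabs_zero[OF \<epsilon>] range
          distr_converges_sorted_spectrum distr_converges_tagged_samples e])
       (auto simp: sorted_spectrum_def tagged_samples_def length_samples intro: sorted_sort_key)
  thus "eventually (\<lambda>n. \<forall>i\<in>{..<size (Lam n)}.
      \<bar>sorted_spectrum n ! i - fst (tagged_samples n ! i)\<bar> < e) sequentially"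
    by eventually_elim (simp add: length_sorted_spectrum length_tagged_samples)
qed simp

lemma sum_block: "(\<Sum>j\<in>{1..k}. block n j) = Lam n"
proof -
  have "snd ` set (tagged_samples n) \<subseteq> {1..k}" using tagged_samples_tags by blast
  hence "(\<Sum>j\<in>{1..k}. block n j) = mset (sorted_spectrum n)"
    unfolding block_def
    by (intro sum_mset_block_of) (auto simp: length_sorted_spectrum length_tagged_samples)
  thus ?thesis by (simp add: sorted_spectrum_def)
qed

lemma size_block:
  assumes j: "j \<in> {1..k}"
  shows "size (block n j) = size (Lt n j)"
proof -
  have "length (filter (\<lambda>p. snd p = j) (tagged_samples n)) = size (Lt n j)"
    using arg_cong[OF mset_filter_tagged_samples[OF j, of n], of size]
    by (simp add: length_samples size_filter_mset_mset)
  thus ?thesis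
    unfolding block_def by (simp add: length_block_of length_sorted_spectrum length_tagged_samples)
qed

lemma block_localized:
  assumes j: "j \<in> {1..k}"
  shows "set_mset (block n j) \<subseteq>
    {Inf (f j ` {a..b}) - matching_error n .. Sup (f j ` {a..b}) + matching_error n}"
proof
  fix t assume "t \<in># block n j"
  then obtain p where "p \<in> set (tagged_samples n)" "snd p = j" "\<bar>t - fst p\<bar> \<le> matching_error n"
    using set_block_of[of "sorted_spectrum n" "tagged_samples n" "matching_error n" t j]
      matching_error_ge
    by (auto simp: block_def length_sorted_spectrum length_tagged_samples)
  thus "t \<in> {Inf (f j ` {a..b}) - matching_error n .. Sup (f j ` {a..b}) + matching_error n}"
    using tagged_samples_in_range[of p n] by (auto simp: abs_le_iff)
qed

lemma has_distr_block:
  assumes j: "j \<in> {1..k}"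
  shows "has_distr a b (f j) (\<lambda>n. block n j)"
  unfolding has_distr_iff
proof
  show "filterlim (\<lambda>n. size (block n j)) at_top sequentially"
    using filterlim_size_Lt[OF j] by (simp add: size_block[OF j])
  let ?xs = "\<lambda>n. map fst (filter (\<lambda>p. snd p = j) (tagged_samples n))"
  let ?ys = "\<lambda>n. block_of (sorted_spectrum n) (tagged_samples n) j"
  have "distr_converges (\<lambda>n. mset (?ys n)) (symbol_mean a b (f j))"
  proof (rule distr_converges_perturb[OF _ matching_error_tendsto])
    show "length (?ys n) = length (?xs n)" for n
      by (simp add: length_block_of length_sorted_spectrum length_tagged_samples)
    show "\<bar>?xs n ! i - ?ys n ! i\<bar> \<le> matching_error n" if "i < length (?xs n)" for n i
      using block_of_close[of "sorted_spectrum n" "tagged_samples n" "matching_error n" i j] that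
        matching_error_ge
      by (simp add: length_block_of length_sorted_spectrum length_tagged_samples abs_minus_commute)
    show "distr_converges (\<lambda>n. mset (?xs n)) (symbol_mean a b (f j))"
      unfolding samples_of_tag[OF j] by (rule distr_converges_samples[OF j])
  qed
  thus "distr_converges (\<lambda>n. block n j) (symbol_mean a b (f j))" by (simp add: block_def)
qed

lemma grid_matching_block: "j \<in> {1..k} \<Longrightarrow> grid_matching a b (f j) (\<lambda>n. block n j)"
  using has_distr_block block_localized matching_error_tendsto
  by (intro grid_matching_if_localized[OF ab bdd cont ER]) (auto simp: has_distr_iff)

end

theorem theorem2p7:
  fixes a b :: real and k :: nat
    and f :: "nat \<Rightarrow> real \<Rightarrow> real"
    and Lam :: "nat \<Rightarrow> real multiset"
    and Lt :: "nat \<Rightarrow> nat \<Rightarrow> real multiset"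
  assumes ab: "a < b" and k: "k \<ge> 1"
    and bdd: "\<And>j. j \<in> {1..k} \<Longrightarrow> bounded (f j ` {a..b})"
    and cont_ae: "\<And>j. j \<in> {1..k} \<Longrightarrow>
         AE x in lebesgue. x \<in> {a..b} \<longrightarrow> continuous (at x within {a..b}) (f j)"
    and ER: "\<And>j. j \<in> {1..k} \<Longrightarrow>
         ess_range a b (f j) = {Inf (f j ` {a..b}) .. Sup (f j ` {a..b})}"
    and dn: "filterlim (\<lambda>n. size (Lam n)) at_top sequentially"
    and distr: "has_distr_diag a b k f Lam"
    and part: "\<And>n. (\<Sum>j\<in>{1..k}. Lt n j) = Lam n"
    and card: "\<And>j. j \<in> {1..k} \<Longrightarrow>
         (\<lambda>n. real (size (Lt n j)) / real (size (Lam n))) \<longlonglongrightarrow> 1 / real k"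
    and eps: "\<exists>\<epsilon>::nat \<Rightarrow> real. \<epsilon> \<longlonglongrightarrow> 0 \<and>
         (\<forall>n. \<forall>j\<in>{1..k}. set_mset (Lt n j) \<subseteq>
             {Inf (f j ` {a..b}) - \<epsilon> n .. Sup (f j ` {a..b}) + \<epsilon> n})"
  shows "\<exists>P :: nat \<Rightarrow> nat \<Rightarrow> real multiset.
     (\<forall>n. (\<Sum>j\<in>{1..k}. P n j) = Lam n) \<and>
     (\<forall>n. \<forall>j\<in>{1..k}. size (P n j) = size (Lt n j)) \<and>
     (\<exists>\<delta>::nat \<Rightarrow> real. \<delta> \<longlonglongrightarrow> 0 \<and>
         (\<forall>n. \<forall>j\<in>{1..k}. set_mset (P n j) \<subseteq>
             {Inf (f j ` {a..b}) - \<delta> n .. Sup (f j ` {a..b}) + \<delta> n})) \<and>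
     (\<forall>j\<in>{1..k}. has_distr a b (f j) (\<lambda>n. P n j)) \<and>
     (\<forall>j\<in>{1..k}. \<forall>x :: nat \<Rightarrow> nat \<Rightarrow> real.
        asym_unif_grid a b (\<lambda>n. size (P n j)) x \<and>
        (\<forall>n. \<forall>i\<in>{1..size (P n j)}. x n i \<in> {a..b}) \<longrightarrow>
        (\<forall>lam :: nat \<Rightarrow> nat \<Rightarrow> real.
          (\<forall>n. mset (map (lam n) [1..<size (P n j) + 1]) = P n j) \<longrightarrow>
          ((\<forall>\<sigma> \<tau> :: nat \<Rightarrow> nat \<Rightarrow> nat.
              (\<forall>n. \<sigma> n permutes {1..size (P n j)} \<and> \<tau> n permutes {1..size (P n j)} \<and>
                   sorted (map (\<lambda>i. f j (x n (\<sigma> n i))) [1..<size (P n j) + 1]) \<and>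
                   sorted (map (\<lambda>i. lam n (\<tau> n i)) [1..<size (P n j) + 1])) \<longrightarrow>
              (\<lambda>n. Max ((\<lambda>i. \<bar>f j (x n (\<sigma> n i)) - lam n (\<tau> n i)\<bar>) ` {1..size (P n j)}))
                \<longlonglongrightarrow> 0) \<and>
           (\<lambda>n. Min ((\<lambda>\<tau>. Max ((\<lambda>i. \<bar>f j (x n i) - lam n (\<tau> i)\<bar>) ` {1..size (P n j)}))
                       ` {\<tau>. \<tau> permutes {1..size (P n j)}})) \<longlonglongrightarrow> 0)))"
proof -
  obtain \<epsilon> :: "nat \<Rightarrow> real" where \<epsilon>: "\<epsilon> \<longlonglongrightarrow> 0"
    and localized: "\<And>n j. j \<in> {1..k} \<Longrightarrow>
      set_mset (Lt n j) \<subseteq> {Inf (f j ` {a..b}) - \<epsilon> n .. Sup (f j ` {a..b}) + \<epsilon> n}"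
    using eps by blast
  interpret diag_spectrum a b k f Lam Lt \<epsilon>
    by unfold_locales (fact ab k bdd cont_ae ER distr part card \<epsilon> localized)+
  have "\<forall>j\<in>{1..k}. grid_matching a b (f j) (\<lambda>n. block n j)"
    using grid_matching_block by blast
  then show ?thesis
    unfolding grid_matching_def
    using sum_block size_block block_localized has_distr_block matching_error_tendsto
    by (intro exI[of _ block] conjI exI[of _ matching_error]) auto
qed

end
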